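(* Let $X$ be an infinite dimensional Banach lattice and let $(e_k)$ denote the canonical unit vectors of sequence spaces. (i) For every $m\in\mathbb N$ and all pairwise disjointly supported sequences $u_1,\dots,u_m\in X_U$, $$\Big\|\sum_{k=1}^m u_k\Big\|_{X_U}\le\Big\|\sum_{k=1}^m\|u_k\|_{X_U}e_k\Big\|_{X_U}.$$ (ii) For every $m\in\mathbb N$ and all pairwise disjointly supported sequences $u_1,\dots,u_m\in X_L$, $$\Big\|\sum_{k=1}^m\|u_k\|_{X_L}e_k\Big\|_{X_L}\le\Big\|\sum_{k=1}^m u_k\Big\|_{X_L}.$$
   Context: Banach lattices are real. For a Banach lattice $X$ and $n\in\mathbb N$, $\mathfrak B_n(X)$ is the set of $n$-tuples of pairwise disjoint ($|x_i|\wedge|x_j|=0$) norm-one elements. For $a\in\mathbb R^n$: $\|a\|_{X_U(n)}:=\sup\{\|\sum_{i=1}^n a_ix_i\|_X:(x_i)\in\mathfrak B_n(X)\}$; $\Phi_n(a):=\inf\{\|\sum_{i=1}^n a_ix_i\|_X:(x_i)\in\mathfrak B_n(X)\}$; $\|a\|_{X_L(n)}:=\inf\{\sum_{k\in F}\Phi_n(a^k): F\text{ finite}, a^k\in\mathbb R^n, a=\sum_{k\in F}a^k\}$. $X_U$ (resp. $X_L$) is the space of real sequences $a$ with $\|a\|_{X_U}:=\sup_n\|(a_i)_{i=1}^n\|_{X_U(n)}<\infty$ (resp. $\|a\|_{X_L}:=\sup_n\|(a_i)_{i=1}^n\|_{X_L(n)}<\infty$). *)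

theory Defs
  imports "HOL-Analysis.Analysis"
begin

text \<open>A real Banach lattice is modelled as a type 'a which is a real Banach space,
  an ordered real vector space and a lattice (for the same order), i.e. a Riesz space,
  whose norm is a lattice norm.\<close>

definition lat_abs :: "'a::{ordered_real_vector, lattice} \<Rightarrow> 'a" where
  "lat_abs x = sup x (- x)"

definition banach_lattice :: "'a::{banach, ordered_real_vector, lattice} itself \<Rightarrow> bool" where
  "banach_lattice T \<longleftrightarrow>
     (\<forall>x y::'a. lat_abs x \<le> lat_abs y \<longrightarrow> norm x \<le> norm y)"

definition infinite_dimensional :: "'a::real_vector itself \<Rightarrow> bool" where
  "infinite_dimensional T \<longleftrightarrow> \<not> (\<exists>B::'a set. finite B \<and> span B = UNIV)"

definition lat_disjoint :: "'a::{ordered_real_vector, lattice} \<Rightarrow> 'a \<Rightarrow> bool" where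
  "lat_disjoint x y \<longleftrightarrow> inf (lat_abs x) (lat_abs y) = 0"

definition disj_tuples :: "'a::{banach, ordered_real_vector, lattice} itself \<Rightarrow> nat \<Rightarrow> (nat \<Rightarrow> 'a) set" where
  "disj_tuples T n = {x. (\<forall>i<n. norm (x i) = 1) \<and>
                        (\<forall>i<n. \<forall>j<n. i \<noteq> j \<longrightarrow> lat_disjoint (x i) (x j))}"

definition XU_n :: "'a::{banach, ordered_real_vector, lattice} itself \<Rightarrow> nat \<Rightarrow> (nat \<Rightarrow> real) \<Rightarrow> ereal" where
  "XU_n T n a = (SUP x\<in>disj_tuples T n. ereal (norm (\<Sum>i<n. a i *\<^sub>R x i)))"

definition Phi_n :: "'a::{banach, ordered_real_vector, lattice} itself \<Rightarrow> nat \<Rightarrow> (nat \<Rightarrow> real) \<Rightarrow> ereal" where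
  "Phi_n T n a = (INF x\<in>disj_tuples T n. ereal (norm (\<Sum>i<n. a i *\<^sub>R x i)))"

definition XL_n :: "'a::{banach, ordered_real_vector, lattice} itself \<Rightarrow> nat \<Rightarrow> (nat \<Rightarrow> real) \<Rightarrow> ereal" where
  "XL_n T n a = Inf {(\<Sum>k<K. Phi_n T n (b k)) | K (b :: nat \<Rightarrow> nat \<Rightarrow> real).
                      \<forall>i<n. a i = (\<Sum>k<K. b k i)}"

definition XU_norm :: "'a::{banach, ordered_real_vector, lattice} itself \<Rightarrow> (nat \<Rightarrow> real) \<Rightarrow> ereal" where
  "XU_norm T a = (SUP n. XU_n T n a)"

definition XL_norm :: "'a::{banach, ordered_real_vector, lattice} itself \<Rightarrow> (nat \<Rightarrow> real) \<Rightarrow> ereal" where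
  "XL_norm T a = (SUP n. XL_n T n a)"

definition XU :: "'a::{banach, ordered_real_vector, lattice} itself \<Rightarrow> (nat \<Rightarrow> real) set" where
  "XU T = {a. XU_norm T a < \<infinity>}"

definition XL :: "'a::{banach, ordered_real_vector, lattice} itself \<Rightarrow> (nat \<Rightarrow> real) set" where
  "XL T = {a. XL_norm T a < \<infinity>}"

definition unit_vec :: "nat \<Rightarrow> nat \<Rightarrow> real" where
  "unit_vec k = (\<lambda>i. if i = k then 1 else 0)"

definition disj_supported :: "nat \<Rightarrow> (nat \<Rightarrow> nat \<Rightarrow> real) \<Rightarrow> bool" where
  "disj_supported m u \<longleftrightarrow> (\<forall>j<m. \<forall>k<m. j \<noteq> k \<longrightarrow> (\<forall>i. u j i = 0 \<or> u k i = 0))"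

end

theory Submission
  imports Defs "HOL-Library.Lattice_Algebras"
begin

text \<open>
  Both inequalities rest on one approximation property of an infinite-dimensional Banach lattice:
  a normalized disjoint family \<open>(z\<^sub>i)\<^sub>i\<^sub>\<in>\<^sub>S\<close> can be enlarged to any finite index set \<open>T \<supseteq> S\<close>
  while the norm of a fixed combination \<open>\<Sum>\<^sub>i\<^sub>\<in>\<^sub>A a\<^sub>i z\<^sub>i\<close> (\<open>A \<subseteq> S\<close>) changes by less than any \<open>\<epsilon> > 0\<close>.
  To add one index, either some nonzero element is disjoint from all \<open>z\<^sub>i\<close>, or, since a maximal finite
  disjoint system would span the space, some \<open>\<bar>z\<^sub>j\<bar>\<close> dominates arbitrarily many disjoint positive
  pieces.  Cutting \<open>\<bar>z\<^sub>j\<bar>\<close> along each piece and averaging shows that one cut changes the norm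
  arbitrarily little; the part cut off supplies the new element.

  For a disjoint tuple \<open>x\<close> and disjointly supported \<open>u\<^sub>k\<close>, the blocks \<open>y\<^sub>k = \<Sum>\<^sub>i u\<^sub>k(i) x\<^sub>i\<close> are
  disjoint and \<open>\<Sum>\<^sub>i (\<Sum>\<^sub>k u\<^sub>k(i)) x\<^sub>i = \<Sum>\<^sub>k \<parallel>y\<^sub>k\<parallel> (y\<^sub>k / \<parallel>y\<^sub>k\<parallel>)\<close>, which is approximated by
  \<open>\<Sum>\<^sub>k \<parallel>y\<^sub>k\<parallel> w\<^sub>k\<close> for a disjoint \<open>m\<close>-tuple \<open>w\<close>.  Since \<open>\<parallel>y\<^sub>k\<parallel> \<le> \<parallel>u\<^sub>k\<parallel>\<^sub>X\<^sub>U\<close>, this gives (i).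
  For (ii), a near-optimal decomposition of \<open>\<Sum>\<^sub>k u\<^sub>k\<close> restricted to the support of \<open>u\<^sub>k\<close>
  decomposes \<open>u\<^sub>k\<close>, and the blocks of its near-optimal tuples yield, by the same approximation,
  a decomposition of \<open>(\<parallel>u\<^sub>k\<parallel>\<^sub>X\<^sub>L)\<^sub>k\<close> whose cost exceeds \<open>\<parallel>\<Sum>\<^sub>k u\<^sub>k\<parallel>\<^sub>X\<^sub>L\<close> by at most \<open>\<epsilon>\<close>.
\<close>

section \<open>Riesz spaces\<close>

text \<open>A Riesz space is a lattice-ordered group; this interpretation makes the library
  \<open>Lattice_Algebras\<close> (positive parts \<open>riesz.pprt\<close>, distributivity laws) available for it.\<close>

interpretation riesz: lattice_ab_group_add "(+)" "0::'a::{ordered_real_vector,lattice}" "(-)" uminus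
  "(\<le>)" "(<)" inf sup
  by unfold_locales

lemma scaleR_sup_nonneg:
  fixes x y :: "'a::{ordered_real_vector,lattice}"
  assumes "0 \<le> c"
  shows "c *\<^sub>R sup x y = sup (c *\<^sub>R x) (c *\<^sub>R y)"
proof (cases "c = 0")
  case False
  with assms have c: "0 < c" by simp
  show ?thesis
  proof (rule antisym)
    have "x \<le> inverse c *\<^sub>R sup (c *\<^sub>R x) (c *\<^sub>R y)" "y \<le> inverse c *\<^sub>R sup (c *\<^sub>R x) (c *\<^sub>R y)"
      using scaleR_left_mono[of "c *\<^sub>R x" "sup (c *\<^sub>R x) (c *\<^sub>R y)" "inverse c"]
        scaleR_left_mono[of "c *\<^sub>R y" "sup (c *\<^sub>R x) (c *\<^sub>R y)" "inverse c"] c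
      by simp_all
    then have "sup x y \<le> inverse c *\<^sub>R sup (c *\<^sub>R x) (c *\<^sub>R y)" by simp
    from scaleR_left_mono[OF this, of c] c
    show "c *\<^sub>R sup x y \<le> sup (c *\<^sub>R x) (c *\<^sub>R y)" by simp
    show "sup (c *\<^sub>R x) (c *\<^sub>R y) \<le> c *\<^sub>R sup x y"
      using scaleR_left_mono[of x "sup x y" c] scaleR_left_mono[of y "sup x y" c] assms by simp
  qed
qed simp

lemma scaleR_inf_nonneg:
  fixes x y :: "'a::{ordered_real_vector,lattice}"
  assumes "0 \<le> c"
  shows "c *\<^sub>R inf x y = inf (c *\<^sub>R x) (c *\<^sub>R y)"
proof -
  have "c *\<^sub>R inf x y = - (c *\<^sub>R sup (- x) (- y))"
    by (simp only: riesz.inf_eq_neg_sup[of x y] scaleR_minus_right)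
  also have "\<dots> = - sup (- (c *\<^sub>R x)) (- (c *\<^sub>R y))"
    by (simp only: scaleR_sup_nonneg[OF assms] scaleR_minus_right)
  also have "\<dots> = inf (c *\<^sub>R x) (c *\<^sub>R y)"
    by (rule riesz.inf_eq_neg_sup[symmetric])
  finally show ?thesis .
qed

lemma lat_abs_nonneg: "0 \<le> lat_abs (x::'a::{ordered_real_vector,lattice})"
proof -
  have "x + - x \<le> lat_abs x + lat_abs x"
    unfolding lat_abs_def by (intro add_mono sup_ge1 sup_ge2)
  then show ?thesis by simp
qed

lemma lat_abs_of_nonneg: "0 \<le> (x::'a::{ordered_real_vector,lattice}) \<Longrightarrow> lat_abs x = x"
  unfolding lat_abs_def by (simp add: sup_absorb1 order_trans[of "-x" 0 x])

lemma lat_abs_idem [simp]: "lat_abs (lat_abs (x::'a::{ordered_real_vector,lattice})) = lat_abs x"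
  by (rule lat_abs_of_nonneg[OF lat_abs_nonneg])

lemma lat_abs_minus [simp]: "lat_abs (- (x::'a::{ordered_real_vector,lattice})) = lat_abs x"
  unfolding lat_abs_def by (simp add: sup_commute)

lemma lat_abs_zero [simp]: "lat_abs (0::'a::{ordered_real_vector,lattice}) = 0"
  unfolding lat_abs_def by simp

lemma lat_abs_ge: "(x::'a::{ordered_real_vector,lattice}) \<le> lat_abs x" "- x \<le> lat_abs x"
  unfolding lat_abs_def by auto

lemma lat_abs_scaleR: "lat_abs (c *\<^sub>R (x::'a::{ordered_real_vector,lattice})) = \<bar>c\<bar> *\<^sub>R lat_abs x"
proof (cases "0 \<le> c")
  case True
  then show ?thesis
    using scaleR_sup_nonneg[OF True, of x "-x"] unfolding lat_abs_def by simp
next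
  case False
  then have "0 \<le> - c" "\<bar>c\<bar> = - c" by auto
  then show ?thesis
    using scaleR_sup_nonneg[of "-c" "-x" x] unfolding lat_abs_def by (simp add: sup_commute)
qed

lemma lat_abs_triangle:
  "lat_abs ((x::'a::{ordered_real_vector,lattice}) + y) \<le> lat_abs x + lat_abs y"
  using add_mono[OF lat_abs_ge(1)[of x] lat_abs_ge(1)[of y]]
    add_mono[OF lat_abs_ge(2)[of x] lat_abs_ge(2)[of y]]
  unfolding lat_abs_def[of "x + y"] by simp

text \<open>The negative part of \<open>x\<close> is \<open>riesz.pprt (- x)\<close>.\<close>

lemma pprt_diff_pprt_minus: "riesz.pprt x - riesz.pprt (- x) = (x::'a::{ordered_real_vector,lattice})"
  using riesz.prts[of x] by (simp add: riesz.pprt_neg)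

lemma inf_pprt_pprt_minus: "inf (riesz.pprt x) (riesz.pprt (- x)) = (0::'a::{ordered_real_vector,lattice})"
proof -
  have "inf (riesz.pprt x) (riesz.pprt (- x)) = riesz.pprt x + inf 0 (- x)"
    using riesz.add_inf_distrib_left[of "riesz.pprt x" 0 "-x"] pprt_diff_pprt_minus[of x]
    by (simp add: algebra_simps)
  also have "inf 0 (- x) = - riesz.pprt x"
    using riesz.neg_sup_eq_inf[of 0 x] by (simp add: riesz.pprt_def sup_commute)
  finally show ?thesis by simp
qed

lemma pprt_add_pprt_minus: "riesz.pprt x + riesz.pprt (- x) = lat_abs (x::'a::{ordered_real_vector,lattice})"
proof -
  have "riesz.pprt x + riesz.pprt (- x) = sup (riesz.pprt x - x) (riesz.pprt x)"
    using riesz.add_sup_distrib_left[of "riesz.pprt x" "-x" 0] by (simp add: riesz.pprt_def)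
  also have "riesz.pprt x - x = sup 0 (- x)"
    using riesz.add_sup_distrib_right[of x 0 "-x"] by (simp add: riesz.pprt_def)
  also have "sup (sup 0 (- x)) (riesz.pprt x) = sup (lat_abs x) 0"
    by (simp add: riesz.pprt_def lat_abs_def sup_aci)
  finally show ?thesis using lat_abs_nonneg[of x] by (simp add: sup_absorb1)
qed

lemma pprt_le_lat_abs: "riesz.pprt x \<le> lat_abs (x::'a::{ordered_real_vector,lattice})"
  using pprt_add_pprt_minus[of x] riesz.zero_le_pprt[of "-x"] by (metis le_add_same_cancel1)

lemma lat_abs_diff_of_inf_eq_0:
  fixes p q :: "'a::{ordered_real_vector,lattice}"
  assumes "0 \<le> p" "0 \<le> q" "inf p q = 0"
  shows "lat_abs (p - q) = p + q"
proof -
  have "lat_abs (p - q) = sup ((p + p) - (p + q)) ((q + q) - (p + q))"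
    unfolding lat_abs_def by (simp add: algebra_simps)
  also have "\<dots> = sup (p + p) (q + q) - (p + q)"
    using riesz.add_sup_distrib_right[of "p + p" "q + q" "- (p + q)"] by (simp add: algebra_simps)
  also have "sup (p + p) (q + q) = 2 *\<^sub>R sup p q"
    using scaleR_sup_nonneg[of 2 p q] by (simp add: scaleR_2)
  also have "sup p q = p + q" using riesz.add_eq_inf_sup[of p q] assms(3) by simp
  finally show ?thesis by (simp add: scaleR_2)
qed

lemma inf_add_le_add_inf:
  fixes a a' b :: "'a::{ordered_real_vector,lattice}"
  assumes "0 \<le> a" "0 \<le> a'" "0 \<le> b"
  shows "inf (a + a') b \<le> inf a b + inf a' b"
proof -
  have "inf a b + inf a' b = inf (inf (a + a') (a + b)) (inf (b + a') (b + b))"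
    by (simp only: riesz.add_inf_distrib_right riesz.add_inf_distrib_left add.commute inf_aci)
  moreover have "inf (a + a') b \<le> a + b" "inf (a + a') b \<le> b + a'" "inf (a + a') b \<le> b + b"
    using assms by (meson add_increasing add_increasing2 inf.coboundedI2 order_refl)+
  ultimately show ?thesis by simp
qed

lemma diff_inf_eq_pprt: "x - inf x y = riesz.pprt (x - (y::'a::{ordered_real_vector,lattice}))"
  using riesz.add_sup_distrib_left[of x "- x" "- y"]
  by (simp add: riesz.diff_inf_eq_sup riesz.pprt_def sup_commute)

lemma pprt_pieces_below:
  fixes r u :: "'a::{ordered_real_vector,lattice}"
  assumes "0 \<le> r" "0 \<le> u" "0 \<le> d" "d \<le> 1"
  shows "riesz.pprt (inf r u - d *\<^sub>R u) \<le> u" "riesz.pprt (d *\<^sub>R u - r) \<le> u"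
    "inf (riesz.pprt (inf r u - d *\<^sub>R u)) (riesz.pprt (d *\<^sub>R u - r)) = 0"
proof -
  have du: "0 \<le> d *\<^sub>R u" "d *\<^sub>R u \<le> u"
    using assms scaleR_right_mono[of d 1 u] by (simp_all add: scaleR_nonneg_nonneg)
  have "inf r u - d *\<^sub>R u \<le> inf r u" using du(1) by (simp only: diff_le_eq le_add_same_cancel1)
  also have "\<dots> \<le> u" by simp
  finally show "riesz.pprt (inf r u - d *\<^sub>R u) \<le> u" unfolding riesz.pprt_def using assms(2) by (rule sup_least)
  have "d *\<^sub>R u - r \<le> d *\<^sub>R u" using assms(1) by (simp only: diff_le_eq le_add_same_cancel1)
  also have "\<dots> \<le> u" by (rule du(2))
  finally show "riesz.pprt (d *\<^sub>R u - r) \<le> u" unfolding riesz.pprt_def using assms(2) by (rule sup_least)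
  have "inf (riesz.pprt (inf r u - d *\<^sub>R u)) (riesz.pprt (d *\<^sub>R u - r))
      \<le> inf (riesz.pprt (r - d *\<^sub>R u)) (riesz.pprt (d *\<^sub>R u - r))"
    by (intro inf_mono riesz.pprt_mono) simp_all
  also have "\<dots> = 0" using inf_pprt_pprt_minus[of "r - d *\<^sub>R u"] by simp
  finally show "inf (riesz.pprt (inf r u - d *\<^sub>R u)) (riesz.pprt (d *\<^sub>R u - r)) = 0"
    by (simp add: antisym)
qed

lemma lat_disjoint_commute: "lat_disjoint x y \<longleftrightarrow> lat_disjoint y (x::'a::{ordered_real_vector,lattice})"
  unfolding lat_disjoint_def by (simp add: inf_commute)

lemma lat_disjoint_nonneg_iff:
  fixes x y :: "'a::{ordered_real_vector,lattice}"
  assumes "0 \<le> x" "0 \<le> y"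
  shows "lat_disjoint x y \<longleftrightarrow> inf x y = 0"
  unfolding lat_disjoint_def using assms by (simp add: lat_abs_of_nonneg)

lemma lat_disjoint_dominated:
  fixes u v y :: "'a::{ordered_real_vector,lattice}"
  assumes "lat_disjoint v y" "lat_abs u \<le> c *\<^sub>R lat_abs v"
  shows "lat_disjoint u y"
proof -
  define c' where "c' = max c 1"
  have "c *\<^sub>R lat_abs v \<le> c' *\<^sub>R lat_abs v" "lat_abs y \<le> c' *\<^sub>R lat_abs y"
    using scaleR_right_mono[of c c' "lat_abs v"] scaleR_right_mono[of 1 c' "lat_abs y"]
    by (simp_all add: c'_def lat_abs_nonneg)
  with assms(2) have "inf (lat_abs u) (lat_abs y) \<le> inf (c' *\<^sub>R lat_abs v) (c' *\<^sub>R lat_abs y)"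
    by (meson inf_mono order_trans)
  also have "\<dots> = 0"
    using assms(1) scaleR_inf_nonneg[of c' "lat_abs v" "lat_abs y"]
    by (simp add: c'_def lat_disjoint_def)
  finally show ?thesis
    unfolding lat_disjoint_def by (simp add: antisym lat_abs_nonneg)
qed

lemma lat_disjoint_scaleR:
  "lat_disjoint x y \<Longrightarrow> lat_disjoint (c *\<^sub>R x) (d *\<^sub>R (y::'a::{ordered_real_vector,lattice}))"
proof -
  have scale_left: "lat_disjoint (e *\<^sub>R u) v" if "lat_disjoint u v" for e and u v :: 'a
    using that by (rule lat_disjoint_dominated[where c = "\<bar>e\<bar>"]) (simp add: lat_abs_scaleR)
  assume "lat_disjoint x y"
  then show ?thesis by (metis scale_left lat_disjoint_commute)
qed

lemma lat_disjoint_scaleR_left: "lat_disjoint x y \<Longrightarrow> lat_disjoint (c *\<^sub>R x) (y::'a::{ordered_real_vector,lattice})"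
  using lat_disjoint_scaleR[of x y c 1] by simp

lemma lat_disjoint_zero [simp]: "lat_disjoint 0 (y::'a::{ordered_real_vector,lattice})"
  unfolding lat_disjoint_def by (simp add: inf_absorb1 lat_abs_nonneg)

lemma lat_disjoint_add:
  fixes x x' y :: "'a::{ordered_real_vector,lattice}"
  assumes "lat_disjoint x y" "lat_disjoint x' y"
  shows "lat_disjoint (x + x') y"
proof -
  have "inf (lat_abs (x + x')) (lat_abs y) \<le> inf (lat_abs x + lat_abs x') (lat_abs y)"
    using lat_abs_triangle by (rule inf_mono) simp
  also have "\<dots> \<le> inf (lat_abs x) (lat_abs y) + inf (lat_abs x') (lat_abs y)"
    by (rule inf_add_le_add_inf) (simp_all add: lat_abs_nonneg)
  also have "\<dots> = 0" using assms unfolding lat_disjoint_def by simp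
  finally show ?thesis
    unfolding lat_disjoint_def by (simp add: antisym lat_abs_nonneg)
qed

lemma lat_disjoint_sum:
  fixes f :: "'i \<Rightarrow> 'a::{ordered_real_vector,lattice}"
  assumes "\<And>i. i \<in> I \<Longrightarrow> lat_disjoint (f i) y"
  shows "lat_disjoint (sum f I) y"
  using assms by (induction I rule: infinite_finite_induct) (auto intro: lat_disjoint_add)

lemma lat_abs_add_of_disjoint:
  fixes x y :: "'a::{ordered_real_vector,lattice}"
  assumes "lat_disjoint x y"
  shows "lat_abs (x + y) = lat_abs x + lat_abs y"
proof -
  let ?P = "riesz.pprt x + riesz.pprt y" and ?Q = "riesz.pprt (- x) + riesz.pprt (- y)"
  have nonneg: "0 \<le> ?P" "0 \<le> ?Q" by (simp_all add: add_nonneg_nonneg)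
  have below_abs: "0 \<le> riesz.pprt z" "riesz.pprt z \<le> lat_abs z"
    "0 \<le> riesz.pprt (- z)" "riesz.pprt (- z) \<le> lat_abs z" for z :: 'a
    using pprt_le_lat_abs[of z] pprt_le_lat_abs[of "- z"] by simp_all
  have "lat_disjoint (riesz.pprt (- z)) (riesz.pprt z')" if "lat_disjoint z z'" for z z' :: 'a
  proof -
    have "lat_disjoint (riesz.pprt (- z)) z'"
      using that by (rule lat_disjoint_dominated[where c = 1]) (use below_abs(4)[of z] in \<open>simp add: lat_abs_of_nonneg\<close>)
    then have "lat_disjoint (riesz.pprt z') (riesz.pprt (- z))"
      unfolding lat_disjoint_commute[of _ z']
      by (rule lat_disjoint_dominated[where c = 1]) (use below_abs(2)[of z'] in \<open>simp add: lat_abs_of_nonneg\<close>)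
    then show ?thesis by (simp add: lat_disjoint_commute)
  qed
  then have cross: "inf (riesz.pprt (- x)) (riesz.pprt y) = 0" "inf (riesz.pprt (- y)) (riesz.pprt x) = 0"
    using assms by (simp_all add: lat_disjoint_nonneg_iff lat_disjoint_commute[of x y])
  have "inf ?Q (riesz.pprt z) = 0" if "z = x \<or> z = y" for z
  proof -
    have "inf ?Q (riesz.pprt z) \<le> inf (riesz.pprt (- x)) (riesz.pprt z) + inf (riesz.pprt (- y)) (riesz.pprt z)"
      by (rule inf_add_le_add_inf) simp_all
    also have "\<dots> = 0"
      using that cross inf_pprt_pprt_minus[of x] inf_pprt_pprt_minus[of y] by (auto simp: inf_commute)
    finally show ?thesis by (simp add: antisym)
  qed
  then have "inf ?P ?Q \<le> 0"
    using inf_add_le_add_inf[of "riesz.pprt x" "riesz.pprt y" ?Q] by (simp add: inf_commute)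
  then have "inf ?P ?Q = 0" using nonneg by (simp add: antisym)
  moreover have "x + y = ?P - ?Q"
    using pprt_diff_pprt_minus[of x] pprt_diff_pprt_minus[of y] by (simp add: algebra_simps)
  ultimately have "lat_abs (x + y) = ?P + ?Q" by (simp add: lat_abs_diff_of_inf_eq_0 nonneg)
  then show ?thesis
    using pprt_add_pprt_minus[of x] pprt_add_pprt_minus[of y] by (simp add: algebra_simps)
qed

lemma split_at_multiple:
  fixes g x :: "'a::{ordered_real_vector,lattice}"
  assumes g: "0 \<le> g" "g \<le> x" and M: "0 < M" "\<not> M *\<^sub>R g \<le> x"
  shows "0 \<le> inf x (M *\<^sub>R g)" "inf x (M *\<^sub>R g) \<le> x"
    "\<And>y. lat_disjoint g y \<Longrightarrow> lat_disjoint (inf x (M *\<^sub>R g)) y"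
    "0 \<le> riesz.pprt (M *\<^sub>R g - x)" "riesz.pprt (M *\<^sub>R g - x) \<noteq> 0"
    "\<And>y. lat_disjoint x y \<Longrightarrow> lat_disjoint (riesz.pprt (M *\<^sub>R g - x)) y"
    "inf (riesz.pprt (M *\<^sub>R g - x)) (x - inf x (M *\<^sub>R g)) = 0"
proof -
  have x: "0 \<le> x" using g by simp
  have Mg: "0 \<le> M *\<^sub>R g" using M(1) g(1) by (simp add: scaleR_nonneg_nonneg)
  show "0 \<le> inf x (M *\<^sub>R g)" "inf x (M *\<^sub>R g) \<le> x" using x Mg by simp_all
  show "lat_disjoint (inf x (M *\<^sub>R g)) y" if "lat_disjoint g y" for y
    using that by (rule lat_disjoint_dominated[where c = M]) (simp add: lat_abs_of_nonneg x Mg g(1))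
  show "0 \<le> riesz.pprt (M *\<^sub>R g - x)" by simp
  show "riesz.pprt (M *\<^sub>R g - x) \<noteq> 0"
    using M(2) riesz.le_zero_iff_zero_pprt[of "M *\<^sub>R g - x"] by simp
  show "lat_disjoint (riesz.pprt (M *\<^sub>R g - x)) y" if "lat_disjoint x y" for y
  proof (rule lat_disjoint_dominated[where c = M, OF that])
    have "M *\<^sub>R g - x \<le> M *\<^sub>R g" using x by (simp only: diff_le_eq le_add_same_cancel1)
    then have "riesz.pprt (M *\<^sub>R g - x) \<le> M *\<^sub>R g" using Mg unfolding riesz.pprt_def by (rule sup_least)
    also have "\<dots> \<le> M *\<^sub>R x" using M(1) g(2) by (simp add: scaleR_left_mono)
    finally show "lat_abs (riesz.pprt (M *\<^sub>R g - x)) \<le> M *\<^sub>R lat_abs x" by (simp add: lat_abs_of_nonneg x)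
  qed
  show "inf (riesz.pprt (M *\<^sub>R g - x)) (x - inf x (M *\<^sub>R g)) = 0"
    using inf_pprt_pprt_minus[of "M *\<^sub>R g - x"] unfolding diff_inf_eq_pprt by simp
qed

definition lat_disjoint_on :: "'i set \<Rightarrow> ('i \<Rightarrow> 'a::{ordered_real_vector,lattice}) \<Rightarrow> bool" where
  "lat_disjoint_on I x \<longleftrightarrow> (\<forall>i\<in>I. \<forall>j\<in>I. i \<noteq> j \<longrightarrow> lat_disjoint (x i) (x j))"

lemma lat_disjoint_on_subset: "lat_disjoint_on I x \<Longrightarrow> J \<subseteq> I \<Longrightarrow> lat_disjoint_on J x"
  unfolding lat_disjoint_on_def by blast

lemma lat_disjoint_on_insert:
  "lat_disjoint_on (insert t S) x \<longleftrightarrow> lat_disjoint_on S x \<and> (\<forall>i\<in>S. i \<noteq> t \<longrightarrow> lat_disjoint (x t) (x i))"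
proof (intro iffI conjI)
  assume "lat_disjoint_on S x \<and> (\<forall>i\<in>S. i \<noteq> t \<longrightarrow> lat_disjoint (x t) (x i))"
  then have "lat_disjoint (x i) (x j)" if "i \<in> insert t S" "j \<in> insert t S" "i \<noteq> j" for i j
    using that lat_disjoint_commute[of "x i" "x j"] unfolding lat_disjoint_on_def by auto
  then show "lat_disjoint_on (insert t S) x" unfolding lat_disjoint_on_def by blast
qed (simp_all add: lat_disjoint_on_def)

lemma lat_abs_sum_of_disjoint:
  fixes x :: "'i \<Rightarrow> 'a::{ordered_real_vector,lattice}"
  assumes "finite I" "lat_disjoint_on I x"
  shows "lat_abs (\<Sum>i\<in>I. a i *\<^sub>R x i) = (\<Sum>i\<in>I. \<bar>a i\<bar> *\<^sub>R lat_abs (x i))"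
  using assms
proof (induction I rule: finite_induct)
  case (insert j I)
  have "lat_disjoint (a i *\<^sub>R x i) (a j *\<^sub>R x j)" if "i \<in> I" for i
    using insert that unfolding lat_disjoint_on_def by (intro lat_disjoint_scaleR) auto
  then have "lat_disjoint (a j *\<^sub>R x j) (\<Sum>i\<in>I. a i *\<^sub>R x i)"
    by (subst lat_disjoint_commute) (rule lat_disjoint_sum)
  moreover have "lat_disjoint_on I x" using insert.prems lat_disjoint_on_subset by blast
  ultimately show ?case using insert by (simp add: lat_abs_add_of_disjoint lat_abs_scaleR)
qed simp

lemma sum_le_of_disjoint:
  fixes f :: "'i \<Rightarrow> 'a::{ordered_real_vector,lattice}"
  assumes "finite U" "\<And>v. v \<in> U \<Longrightarrow> 0 \<le> f v \<and> f v \<le> x"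
    "\<And>v v'. v \<in> U \<Longrightarrow> v' \<in> U \<Longrightarrow> v \<noteq> v' \<Longrightarrow> inf (f v) (f v') = 0" "0 \<le> x"
  shows "sum f U \<le> x"
  using assms
proof (induction U rule: finite_induct)
  case (insert v U)
  have "lat_disjoint (f v') (f v)" if "v' \<in> U" for v'
  proof -
    have "v' \<noteq> v" using insert.hyps that by auto
    with that show ?thesis by (simp add: lat_disjoint_nonneg_iff insert.prems)
  qed
  then have "lat_disjoint (sum f U) (f v)" by (rule lat_disjoint_sum)
  moreover have "0 \<le> sum f U" "0 \<le> f v" using insert.prems(1) by (auto intro: sum_nonneg)
  ultimately have "inf (f v) (sum f U) = 0" by (simp add: lat_disjoint_nonneg_iff inf_commute)
  then have "f v + sum f U = sup (f v) (sum f U)" using riesz.add_eq_inf_sup[of "f v" "sum f U"] by simp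
  also have "\<dots> \<le> x" using insert by simp
  finally show ?case using insert.hyps by simp
qed simp

lemma lat_disjoint_sums_of_disjoint_coeffs:
  fixes x :: "'i \<Rightarrow> 'a::{ordered_real_vector,lattice}"
  assumes "lat_disjoint_on I x" "\<And>i. i \<in> I \<Longrightarrow> f i = 0 \<or> g i = 0"
  shows "lat_disjoint (\<Sum>i\<in>I. f i *\<^sub>R x i) (\<Sum>i\<in>I. g i *\<^sub>R x i)"
proof -
  have "lat_disjoint (g i' *\<^sub>R x i') (f i *\<^sub>R x i)" if "i \<in> I" "i' \<in> I" for i i'
  proof (cases "i = i'")
    case True
    with assms(2)[OF that(2)] show ?thesis by (auto simp: lat_disjoint_commute)
  next
    case False
    with assms(1) that show ?thesis unfolding lat_disjoint_on_def by (simp add: lat_disjoint_scaleR)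
  qed
  then show ?thesis by (meson lat_disjoint_commute lat_disjoint_sum)
qed

definition disjoint_system :: "'a::{ordered_real_vector,lattice} set \<Rightarrow> bool" where
  "disjoint_system V \<longleftrightarrow> finite V \<and> (\<forall>v\<in>V. 0 \<le> v \<and> v \<noteq> 0) \<and> (\<forall>v\<in>V. \<forall>w\<in>V. v \<noteq> w \<longrightarrow> inf v w = 0)"

lemma disjoint_system_empty: "disjoint_system {}"
  unfolding disjoint_system_def by simp

lemma disjoint_system_insert:
  fixes y :: "'a::{ordered_real_vector,lattice}"
  assumes "disjoint_system V" "0 \<le> y" "y \<noteq> 0" "\<And>v. v \<in> V \<Longrightarrow> inf y v = 0"
  shows "disjoint_system (insert y V)" "card (insert y V) = Suc (card V)"
proof -
  have "y \<notin> V" using assms(3,4) by force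
  then show "card (insert y V) = Suc (card V)"
    using assms(1) unfolding disjoint_system_def by simp
  show "disjoint_system (insert y V)"
    using assms unfolding disjoint_system_def by (auto simp: inf_commute)
qed

lemma disjoint_system_split:
  fixes a b v :: "'a::{ordered_real_vector,lattice}"
  assumes V: "disjoint_system V" "v \<in> V"
    and ab: "0 \<le> a" "a \<noteq> 0" "0 \<le> b" "b \<noteq> 0" "inf a b = 0" "a \<le> v" "b \<le> v"
  shows "\<exists>W::'a set. disjoint_system W \<and> card W = Suc (card V)"
proof -
  have V0: "disjoint_system (V - {v})"
    using V(1) unfolding disjoint_system_def by auto
  have below_v: "inf c v' = 0" if "v' \<in> V - {v}" "0 \<le> c" "c \<le> v" for c v'
  proof -
    have "inf c v' \<le> inf v v'" using that(3) by (rule inf_mono) simp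
    also have "inf v v' = 0" using V that(1) unfolding disjoint_system_def by auto
    finally show ?thesis using V that unfolding disjoint_system_def by (auto intro: antisym)
  qed
  have b: "disjoint_system (insert b (V - {v}))" "card (insert b (V - {v})) = Suc (card (V - {v}))"
    using disjoint_system_insert[OF V0 ab(3,4)] below_v ab(3,7) by auto
  have "\<forall>x\<in>insert b (V - {v}). inf a x = 0" using below_v ab(1,5,6) by blast
  then have "disjoint_system (insert a (insert b (V - {v})))"
    "card (insert a (insert b (V - {v}))) = Suc (card (insert b (V - {v})))"
    using disjoint_system_insert[OF b(1) ab(1,2)] by auto
  moreover have "card V = Suc (card (V - {v}))"
    using V unfolding disjoint_system_def by (metis card_Suc_Diff1)
  ultimately show ?thesis using b(2) by (intro exI[of _ "insert a (insert b (V - {v}))"]) simp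
qed

lemma disjoint_system_subset: "disjoint_system V \<Longrightarrow> W \<subseteq> V \<Longrightarrow> disjoint_system W"
  unfolding disjoint_system_def by (meson finite_subset subsetD)

lemma disjoint_system_inf_image:
  fixes x :: "'a::{ordered_real_vector,lattice}"
  assumes V: "disjoint_system V" and x: "0 \<le> x" and meets: "\<And>v. v \<in> V \<Longrightarrow> inf v x \<noteq> 0"
  shows "disjoint_system ((\<lambda>v. inf v x) ` V)" "card ((\<lambda>v. inf v x) ` V) = card V"
proof -
  have V_pos: "0 \<le> v" if "v \<in> V" for v using V that unfolding disjoint_system_def by auto
  have disj: "inf (inf v x) (inf v' x) = 0" if "v \<in> V" "v' \<in> V" "v \<noteq> v'" for v v'
  proof -
    have "inf (inf v x) (inf v' x) \<le> inf v v'" by (intro inf_mono) simp_all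
    also have "inf v v' = 0" using V that unfolding disjoint_system_def by blast
    finally show ?thesis using V_pos(1)[OF that(1)] V_pos(1)[OF that(2)] x by (intro antisym) simp_all
  qed
  have "inj_on (\<lambda>v. inf v x) V"
  proof (rule inj_onI, rule ccontr)
    fix v v' assume "v \<in> V" "v' \<in> V" "inf v x = inf v' x" "v \<noteq> v'"
    then show False using disj[of v v'] meets[of v] by simp
  qed
  then show "card ((\<lambda>v. inf v x) ` V) = card V" by (rule card_image)
  define G where "G = (\<lambda>v. inf v x) ` V"
  have "finite G" using V by (simp add: G_def disjoint_system_def)
  moreover have "\<forall>g\<in>G. 0 \<le> g \<and> g \<noteq> 0" using V_pos meets x by (auto simp: G_def)
  moreover have "\<forall>g\<in>G. \<forall>g'\<in>G. g \<noteq> g' \<longrightarrow> inf g g' = 0" using disj unfolding G_def by fastforce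
  ultimately show "disjoint_system ((\<lambda>v. inf v x) ` V)" by (simp add: disjoint_system_def G_def[symmetric])
qed

section \<open>Normalized disjoint tuples and the sequence norms\<close>

definition unit_disjoint_on :: "'i set \<Rightarrow> ('i \<Rightarrow> 'a::{banach, ordered_real_vector, lattice}) \<Rightarrow> bool" where
  "unit_disjoint_on S z \<longleftrightarrow> (\<forall>i\<in>S. norm (z i) = 1) \<and> lat_disjoint_on S z"

lemma unit_disjoint_on_subset: "unit_disjoint_on S z \<Longrightarrow> T \<subseteq> S \<Longrightarrow> unit_disjoint_on T z"
  unfolding unit_disjoint_on_def using lat_disjoint_on_subset by (metis subsetD)

lemma unit_disjoint_on_cong: "(\<And>i. i \<in> S \<Longrightarrow> z i = w i) \<Longrightarrow> unit_disjoint_on S z \<longleftrightarrow> unit_disjoint_on S w"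
  unfolding unit_disjoint_on_def lat_disjoint_on_def by simp

lemma unit_disjoint_on_insert:
  "unit_disjoint_on (insert t S) z \<longleftrightarrow>
    unit_disjoint_on S z \<and> norm (z t) = 1 \<and> (\<forall>i\<in>S. i \<noteq> t \<longrightarrow> lat_disjoint (z t) (z i))"
  unfolding unit_disjoint_on_def lat_disjoint_on_insert by auto

lemma disj_tuples_iff: "x \<in> disj_tuples TYPE('a::{banach, ordered_real_vector, lattice}) n \<longleftrightarrow> unit_disjoint_on {..<n} x"
  unfolding disj_tuples_def unit_disjoint_on_def lat_disjoint_on_def by auto

lemma unit_disjoint_on_update:
  fixes z :: "'i \<Rightarrow> 'a::{banach, ordered_real_vector, lattice}"
  assumes "unit_disjoint_on S z" "t \<notin> S" "y \<noteq> 0" "\<And>i. i \<in> S \<Longrightarrow> lat_disjoint y (z i)"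
  shows "unit_disjoint_on (insert t S) (z(t := (1 / norm y) *\<^sub>R y))"
proof -
  have "unit_disjoint_on S (z(t := (1 / norm y) *\<^sub>R y))"
    using assms(1,2) by (subst unit_disjoint_on_cong[of S _ z]) auto
  then show ?thesis
    using assms(2-4) by (auto simp: unit_disjoint_on_insert intro: lat_disjoint_scaleR_left)
qed

lemma unit_disjoint_on_split:
  fixes z :: "'i \<Rightarrow> 'a::{banach, ordered_real_vector, lattice}"
  assumes z: "unit_disjoint_on S z" "j \<in> S" and t: "t \<notin> S"
    and p: "0 \<le> p" "p \<le> lat_abs (z j)" "p \<noteq> 0"
    and q: "0 \<le> q" "q \<noteq> 0" "\<And>y. lat_disjoint (lat_abs (z j)) y \<Longrightarrow> lat_disjoint q y" "inf q p = 0"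
  shows "unit_disjoint_on (insert t S) (z(j := (1 / norm p) *\<^sub>R p, t := (1 / norm q) *\<^sub>R q))"
proof -
  define S' where "S' = S - {j}"
  have S: "S = insert j S'" "j \<notin> S'" using z(2) by (auto simp: S'_def)
  have z': "unit_disjoint_on S' z" using z(1) unfolding S by (simp add: unit_disjoint_on_insert)
  have zj: "lat_disjoint (z j) (z i)" if "i \<in> S'" for i
    using z(1) S that unfolding S by (auto simp: unit_disjoint_on_insert)
  have p': "lat_disjoint p (z i)" if "i \<in> S'" for i
    using zj[OF that] by (rule lat_disjoint_dominated[where c = 1]) (simp add: p lat_abs_of_nonneg)
  have q': "lat_disjoint q (z i)" if "i \<in> S'" for i
    using zj[OF that] q(3) by (simp add: lat_disjoint_def)
  have qp: "lat_disjoint q p" using p(1) q(1,4) by (simp add: lat_disjoint_nonneg_iff)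
  have "unit_disjoint_on S (z(j := (1 / norm p) *\<^sub>R p))"
    unfolding S using unit_disjoint_on_update[OF z' S(2) p(3) p'] by simp
  moreover have "lat_disjoint q ((z(j := (1 / norm p) *\<^sub>R p)) i)" if "i \<in> S" for i
    using that q' qp lat_disjoint_commute[of q] unfolding S
    by (cases "i = j") (auto intro: lat_disjoint_scaleR_left)
  ultimately show ?thesis using unit_disjoint_on_update[OF _ t q(2)] by blast
qed

lemma norm_le_XU_n:
  fixes x :: "nat \<Rightarrow> 'a::{banach, ordered_real_vector, lattice}"
  assumes "unit_disjoint_on {..<n} x"
  shows "ereal (norm (\<Sum>i<n. b i *\<^sub>R x i)) \<le> XU_n TYPE('a::{banach, ordered_real_vector, lattice}) n b"
  unfolding XU_n_def by (rule SUP_upper) (simp add: disj_tuples_iff assms)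

lemma XU_n_le_XU_norm: "XU_n T n b \<le> XU_norm T b"
  unfolding XU_norm_def by (rule SUP_upper) simp

lemma XL_n_le_XL_norm: "XL_n T n b \<le> XL_norm T b"
  unfolding XL_norm_def by (rule SUP_upper) simp

lemma Phi_n_le_norm:
  fixes x :: "nat \<Rightarrow> 'a::{banach, ordered_real_vector, lattice}"
  assumes "unit_disjoint_on {..<n} x"
  shows "Phi_n TYPE('a::{banach, ordered_real_vector, lattice}) n b \<le> ereal (norm (\<Sum>i<n. b i *\<^sub>R x i))"
  unfolding Phi_n_def by (rule INF_lower) (simp add: disj_tuples_iff assms)

lemma XU_norm_nonneg: "0 \<le> XU_norm TYPE('a::{banach, ordered_real_vector, lattice}) b"
proof -
  have "ereal (norm (\<Sum>i<0. b i *\<^sub>R (0::'a))) \<le> XU_n TYPE('a) 0 b"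
    by (rule norm_le_XU_n) (simp add: unit_disjoint_on_def lat_disjoint_on_def)
  then show ?thesis using XU_n_le_XU_norm[of "TYPE('a)" 0 b] by (simp add: zero_ereal_def)
qed

lemma Phi_n_nonneg: "0 \<le> Phi_n TYPE('a::{banach, ordered_real_vector, lattice}) n b"
  unfolding Phi_n_def by (rule INF_greatest) simp

lemma XL_n_nonneg: "0 \<le> XL_n TYPE('a::{banach, ordered_real_vector, lattice}) n b"
  unfolding XL_n_def by (rule Inf_greatest) (auto intro: sum_nonneg Phi_n_nonneg)

lemma XL_norm_nonneg: "0 \<le> XL_norm TYPE('a::{banach, ordered_real_vector, lattice}) b"
  using XL_n_nonneg XL_n_le_XL_norm order_trans by blast

lemma XL_n_le_decomposition:
  fixes K :: nat and b :: "nat \<Rightarrow> nat \<Rightarrow> real"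
  assumes "\<forall>i<n. a i = (\<Sum>k<K. b k i)"
  shows "XL_n TYPE('a::{banach, ordered_real_vector, lattice}) n a \<le> (\<Sum>k<K. Phi_n TYPE('a) n (b k))"
  unfolding XL_n_def using assms by (intro Inf_lower) blast

lemma sum_unit_vec: "(\<Sum>k<m. c k * unit_vec k i) = (if i < m then c i else 0)"
  by (simp add: unit_vec_def if_distrib cong: if_cong)

lemma real_of_ereal_nonneg_finite: "0 \<le> x \<Longrightarrow> x < \<infinity> \<Longrightarrow> ereal (real_of_ereal x) = x"
  by (cases x) auto

lemma exists_common_index_above:
  fixes f :: "nat \<Rightarrow> nat \<Rightarrow> 'b::complete_linorder"
  assumes "\<And>k. k < m \<Longrightarrow> mono (f k)" "\<And>k. k < m \<Longrightarrow> y k < (SUP n. f k n)"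
  shows "\<exists>N. \<forall>k<m. y k < f k N"
  using assms
proof (induction m)
  case (Suc m)
  then obtain N where N: "\<forall>k<m. y k < f k N" by auto
  obtain N' where N': "y m < f m N'" using Suc.prems(2)[of m] by (auto simp: less_SUP_iff)
  have "y k < f k (max N N')" if "k < Suc m" for k
  proof (cases "k = m")
    case True
    with N' Suc.prems(1)[of m] show ?thesis by (meson lessI max.cobounded2 monoD order_less_le_trans)
  next
    case False
    with N that Suc.prems(1)[of k] show ?thesis by (meson less_SucE max.cobounded1 monoD order_less_le_trans)
  qed
  then show ?case by blast
qed simp

lemma sum_disj_supported_eq:
  assumes "disj_supported m u" "k < m" "u k i \<noteq> 0"
  shows "(\<Sum>k'<m. u k' i) = u k i"
proof -
  have "(\<Sum>k'<m. u k' i) = (\<Sum>k'\<in>{k}. u k' i)"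
    using assms unfolding disj_supported_def by (intro sum.mono_neutral_right) auto
  then show ?thesis by simp
qed

lemma exists_le_average:
  fixes f :: "'i \<Rightarrow> real"
  assumes "finite V" "V \<noteq> {}" "sum f V \<le> C"
  shows "\<exists>v\<in>V. f v \<le> C / card V"
proof (rule ccontr)
  assume "\<not> ?thesis"
  then have "(\<Sum>v\<in>V. C / card V) < sum f V" by (intro sum_strict_mono[OF assms(1,2)]) auto
  with assms show False by simp
qed

section \<open>Banach lattices\<close>

context
  assumes B: "banach_lattice TYPE('a::{banach, ordered_real_vector, lattice})"
begin

lemma norm_le_if_lat_abs_le: "lat_abs x \<le> lat_abs y \<Longrightarrow> norm x \<le> norm (y::'a)"
  using B unfolding banach_lattice_def by blast

lemma norm_mono_nonneg: "0 \<le> x \<Longrightarrow> x \<le> y \<Longrightarrow> norm x \<le> norm (y::'a)"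
  by (rule norm_le_if_lat_abs_le) (simp add: lat_abs_of_nonneg)

lemma norm_lat_abs [simp]: "norm (lat_abs x) = norm (x::'a)"
  by (intro antisym norm_le_if_lat_abs_le) simp_all

lemma norm_sum_of_disjoint_mono:
  fixes x :: "'i \<Rightarrow> 'a"
  assumes "finite I" "lat_disjoint_on I x" "\<And>i. i \<in> I \<Longrightarrow> \<bar>a i\<bar> \<le> \<bar>b i\<bar>"
  shows "norm (\<Sum>i\<in>I. a i *\<^sub>R x i) \<le> norm (\<Sum>i\<in>I. b i *\<^sub>R x i)"
proof (rule norm_le_if_lat_abs_le)
  show "lat_abs (\<Sum>i\<in>I. a i *\<^sub>R x i) \<le> lat_abs (\<Sum>i\<in>I. b i *\<^sub>R x i)"
    unfolding lat_abs_sum_of_disjoint[OF assms(1,2)]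
    by (intro sum_mono scaleR_right_mono assms(3) lat_abs_nonneg)
qed

lemma norm_sum_of_disjoint_eq:
  fixes x :: "'i \<Rightarrow> 'a"
  assumes "finite I" "lat_disjoint_on I x"
  shows "norm (\<Sum>i\<in>I. a i *\<^sub>R x i) = norm (\<Sum>i\<in>I. \<bar>a i\<bar> *\<^sub>R lat_abs (x i))"
proof -
  have "lat_disjoint_on I (\<lambda>i. lat_abs (x i))"
    using assms(2) unfolding lat_disjoint_on_def lat_disjoint_def by simp
  then have "lat_abs (\<Sum>i\<in>I. \<bar>a i\<bar> *\<^sub>R lat_abs (x i)) = lat_abs (\<Sum>i\<in>I. a i *\<^sub>R x i)"
    using assms by (simp add: lat_abs_sum_of_disjoint)
  then show ?thesis by (metis norm_lat_abs)
qed

lemma norm_sum_of_disjoint_split_at: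
  fixes x :: "'i \<Rightarrow> 'a"
  assumes "finite I" "lat_disjoint_on I x"
  shows "norm (\<Sum>i\<in>I. a i *\<^sub>R x i)
    = norm ((\<Sum>i\<in>I - {j}. \<bar>a i\<bar> *\<^sub>R lat_abs (x i)) + (if j \<in> I then \<bar>a j\<bar> else 0) *\<^sub>R lat_abs (x j))"
  using norm_sum_of_disjoint_eq[OF assms, of a] assms(1) by (simp add: sum_diff1)

lemma norm_sum_of_disjoint_subset:
  fixes x :: "'i \<Rightarrow> 'a"
  assumes "finite I" "J \<subseteq> I" "lat_disjoint_on I x"
  shows "norm (\<Sum>i\<in>J. c i *\<^sub>R x i) \<le> norm (\<Sum>i\<in>I. c i *\<^sub>R x i)"
proof -
  have "(\<Sum>i\<in>J. c i *\<^sub>R x i) = (\<Sum>i\<in>I. (if i \<in> J then c i else 0) *\<^sub>R x i)"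
    using assms(1,2) by (intro sum.mono_neutral_cong_right[symmetric]) auto
  also have "norm \<dots> \<le> norm (\<Sum>i\<in>I. c i *\<^sub>R x i)"
    by (rule norm_sum_of_disjoint_mono[OF assms(1,3)]) simp
  finally show ?thesis .
qed

lemma closed_nonneg_cone: "closed {z::'a. 0 \<le> z}"
proof -
  have "norm (riesz.pprt (- z)) \<le> dist w z" if "0 \<le> w" for z w :: 'a
  proof -
    have "riesz.pprt (- z) \<le> riesz.pprt (w - z)"
      using that by (intro riesz.pprt_mono) simp
    also have "\<dots> \<le> lat_abs (w - z)" by (rule pprt_le_lat_abs)
    finally show ?thesis
      using norm_mono_nonneg[OF riesz.zero_le_pprt, of "- z" "lat_abs (w - z)"] by (simp add: dist_norm)
  qed
  note key = this
  show ?thesis unfolding closed_limpt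
  proof (intro allI impI)
    fix z :: 'a
    assume z: "z islimpt {z. 0 \<le> z}"
    have "norm (riesz.pprt (- z)) < e" if e: "0 < e" for e
    proof -
      obtain w where "0 \<le> w" "dist w z < e"
        using z e unfolding islimpt_approachable by auto
      then show ?thesis using key[of w z] by simp
    qed
    then have "riesz.pprt (- z) = 0" by (metis less_irrefl zero_less_norm_iff)
    then show "z \<in> {z. 0 \<le> z}" using riesz.le_zero_iff_zero_pprt[of "- z"] by simp
  qed
qed

lemma archimedean_nonneg_eq_0:
  fixes w u :: 'a
  assumes "0 \<le> w" "\<And>d. 0 < d \<Longrightarrow> w \<le> d *\<^sub>R u"
  shows "w = 0"
proof (rule ccontr)
  assume "w \<noteq> 0"
  then have norm_w: "0 < norm w" by simp
  define d where "d = norm w / (2 * (norm u + 1))"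
  have den: "0 < 2 * (norm u + 1)" by (simp add: add_nonneg_pos)
  then have "norm u / (2 * (norm u + 1)) < 1" by (simp add: divide_less_eq)
  then have d: "0 < d" "d * norm u < norm w"
    using den norm_w mult_strict_left_mono[of "norm u / (2 * (norm u + 1))" 1 "norm w"]
    by (simp_all add: d_def)
  have "norm w \<le> d * norm u"
    using norm_mono_nonneg[OF assms(1) assms(2)[OF d(1)]] d(1) by simp
  with d(2) show False by simp
qed

lemma exists_greatest_multiple_below:
  fixes u y :: 'a
  assumes "0 \<le> u" "u \<noteq> 0" "0 \<le> y"
  obtains c where "0 \<le> c" "c *\<^sub>R u \<le> y" "\<And>s. 0 \<le> s \<Longrightarrow> s *\<^sub>R u \<le> y \<Longrightarrow> s \<le> c"
proof -
  define S where "S = {s::real. 0 \<le> s \<and> s *\<^sub>R u \<le> y}"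
  have bounded: "S \<subseteq> {0 .. norm y / norm u}"
  proof
    fix s assume s: "s \<in> S"
    then have "norm (s *\<^sub>R u) \<le> norm y"
      using assms(1) by (intro norm_mono_nonneg) (simp_all add: S_def scaleR_nonneg_nonneg)
    then show "s \<in> {0 .. norm y / norm u}" using s assms(2) by (simp add: S_def le_divide_eq)
  qed
  have "closed S"
  proof -
    have "S = {0..} \<inter> (\<lambda>s. y - s *\<^sub>R u) -` {z. 0 \<le> z}" unfolding S_def by auto
    moreover have "closed ((\<lambda>s::real. y - s *\<^sub>R u) -` {z. 0 \<le> z})"
      by (rule continuous_closed_vimage[OF closed_nonneg_cone]) (intro continuous_intros)
    ultimately show ?thesis by (simp add: closed_Int)
  qed
  then have "compact ({0 .. norm y / norm u} \<inter> S)" by (rule compact_Int_closed[OF compact_Icc])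
  then have "compact S" using bounded by (simp add: Int_absorb1)
  moreover have "0 \<in> S" unfolding S_def using assms(3) by simp
  ultimately obtain c where "c \<in> S" "\<forall>s\<in>S. s \<le> c"
    using compact_attains_sup[of S] by blast
  with that show ?thesis unfolding S_def by blast
qed

lemma maximal_disjoint_system_peel:
  fixes y u :: 'a
  assumes V: "disjoint_system V" "u \<in> V" and y: "0 \<le> y"
    and maximal: "\<not> (\<exists>W::'a set. disjoint_system W \<and> card W = Suc (card V))"
  shows "\<exists>c\<ge>0. c *\<^sub>R u \<le> y \<and> inf (y - c *\<^sub>R u) u = 0"
proof -
  have u: "0 \<le> u" "u \<noteq> 0" using V unfolding disjoint_system_def by auto
  obtain c where c: "0 \<le> c" "c *\<^sub>R u \<le> y" and greatest: "\<And>s. 0 \<le> s \<Longrightarrow> s *\<^sub>R u \<le> y \<Longrightarrow> s \<le> c"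
    using exists_greatest_multiple_below[OF u y] by blast
  define r where "r = y - c *\<^sub>R u"
  have r: "0 \<le> r" unfolding r_def using c(2) by simp
  have "inf r u = 0"
  proof (rule ccontr)
    assume "inf r u \<noteq> 0"
    then obtain d where d: "0 < d" "\<not> inf r u \<le> d *\<^sub>R u"
      using archimedean_nonneg_eq_0[of "inf r u" u] r u(1) by auto
    have "d < 1"
    proof (rule ccontr)
      assume "\<not> d < 1"
      then have "u \<le> d *\<^sub>R u" using scaleR_right_mono[of 1 d u] u(1) by simp
      with inf_le2 have "inf r u \<le> d *\<^sub>R u" by (rule order_trans)
      with d(2) show False ..
    qed
    text \<open>Splitting \<open>u\<close> along the signs of \<open>inf r u - d u\<close> and \<open>d u - r\<close> would enlarge \<open>V\<close>.\<close>
    note pieces = pprt_pieces_below[OF r u(1), of d]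
    have "riesz.pprt (inf r u - d *\<^sub>R u) = 0 \<or> riesz.pprt (d *\<^sub>R u - r) = 0"
      using disjoint_system_split[OF V, of "riesz.pprt (inf r u - d *\<^sub>R u)" "riesz.pprt (d *\<^sub>R u - r)"]
        pieces d(1) \<open>d < 1\<close> maximal by auto
    then show False
    proof
      assume "riesz.pprt (inf r u - d *\<^sub>R u) = 0"
      with d(2) show False using riesz.le_zero_iff_zero_pprt[of "inf r u - d *\<^sub>R u"] by simp
    next
      assume "riesz.pprt (d *\<^sub>R u - r) = 0"
      then have "(c + d) *\<^sub>R u \<le> y"
        using riesz.le_zero_iff_zero_pprt[of "d *\<^sub>R u - r"] unfolding r_def by (simp add: algebra_simps)
      then show False using greatest[of "c + d"] c(1) d(1) by simp
    qed
  qed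
  then show ?thesis using c unfolding r_def by blast
qed

lemma maximal_disjoint_system_peel_subset:
  fixes y :: 'a
  assumes V: "disjoint_system V" and maximal: "\<not> (\<exists>W::'a set. disjoint_system W \<and> card W = Suc (card V))"
    and y: "0 \<le> y" and "U \<subseteq> V"
  shows "\<exists>r. 0 \<le> r \<and> r \<le> y \<and> (\<forall>u\<in>U. inf r u = 0) \<and> y - r \<in> span U"
  using \<open>U \<subseteq> V\<close>
proof (induction U rule: infinite_finite_induct)
  case (infinite U)
  have "finite V" using V by (simp add: disjoint_system_def)
  with infinite show ?case using finite_subset by blast
next
  case empty
  show ?case using y by (intro exI[of _ y]) simp
next
  case (insert a U)
  have U: "U \<subseteq> V" "a \<in> V" using insert.prems by simp_all
  have V_nonneg: "0 \<le> v" if "v \<in> V" for v using V that unfolding disjoint_system_def by auto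
  obtain r where r: "0 \<le> r" "r \<le> y" "\<forall>u\<in>U. inf r u = 0" "y - r \<in> span U"
    using insert.IH[OF U(1)] by blast
  obtain c where c: "0 \<le> c" "c *\<^sub>R a \<le> r" "inf (r - c *\<^sub>R a) a = 0"
    using maximal_disjoint_system_peel[OF V U(2) r(1) maximal] by blast
  have ca: "0 \<le> c *\<^sub>R a" using c(1) V_nonneg[OF U(2)] by (simp add: scaleR_nonneg_nonneg)
  have "inf (r - c *\<^sub>R a) u = 0" if "u \<in> U" for u
  proof -
    have "inf (r - c *\<^sub>R a) u \<le> inf r u" using ca by (intro inf_mono) simp_all
    also have "inf r u = 0" using r(3) that by blast
    finally have "inf (r - c *\<^sub>R a) u \<le> 0" .
    moreover have "0 \<le> inf (r - c *\<^sub>R a) u" using c(2) V_nonneg that U(1) by auto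
    ultimately show ?thesis by (rule antisym)
  qed
  then have "\<forall>u\<in>insert a U. inf (r - c *\<^sub>R a) u = 0" using c(3) by blast
  moreover have "y - (r - c *\<^sub>R a) \<in> span (insert a U)"
  proof -
    have "y - r \<in> span (insert a U)" using r(4) span_mono[of U "insert a U"] by blast
    moreover have "c *\<^sub>R a \<in> span (insert a U)" by (simp add: span_base span_scale)
    moreover have "y - (r - c *\<^sub>R a) = (y - r) + c *\<^sub>R a" by simp
    ultimately show ?thesis by (metis span_add)
  qed
  moreover have "0 \<le> r - c *\<^sub>R a" using c(2) by simp
  moreover have "r - c *\<^sub>R a \<le> y" using r(2) ca by (simp add: diff_le_eq add_increasing2)
  ultimately show ?case by blast
qed

lemma nonneg_in_span_maximal_disjoint_system:
  fixes y :: 'a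
  assumes V: "disjoint_system V" and maximal: "\<not> (\<exists>W::'a set. disjoint_system W \<and> card W = Suc (card V))"
    and y: "0 \<le> y"
  shows "y \<in> span V"
proof -
  obtain r where r: "0 \<le> r" "\<forall>u\<in>V. inf r u = 0" "y - r \<in> span V"
    using maximal_disjoint_system_peel_subset[OF V maximal y subset_refl] by blast
  have "r = 0"
  proof (rule ccontr)
    assume "r \<noteq> 0"
    then have "disjoint_system (insert r V)" "card (insert r V) = Suc (card V)"
      using disjoint_system_insert[OF V r(1)] r(2) by simp_all
    with maximal show False by blast
  qed
  then show ?thesis using r(3) by simp
qed

lemma span_maximal_disjoint_system:
  fixes V :: "'a set"
  assumes "disjoint_system V" "\<not> (\<exists>W::'a set. disjoint_system W \<and> card W = Suc (card V))"
  shows "span V = UNIV"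
proof -
  have "y \<in> span V" for y
  proof -
    have "riesz.pprt y \<in> span V" "riesz.pprt (- y) \<in> span V"
      by (simp_all add: nonneg_in_span_maximal_disjoint_system[OF assms])
    then show ?thesis using span_diff pprt_diff_pprt_minus[of y] by metis
  qed
  then show ?thesis by auto
qed

lemma exists_multiple_not_below:
  fixes g x :: 'a
  assumes "0 \<le> g" "g \<noteq> 0"
  obtains M where "0 < M" "\<not> M *\<^sub>R g \<le> x"
proof -
  obtain d where d: "0 < d" "\<not> g \<le> d *\<^sub>R x"
    using archimedean_nonneg_eq_0[OF assms(1), of x] assms(2) by auto
  have "\<not> (1 / d) *\<^sub>R g \<le> x"
  proof
    assume "(1 / d) *\<^sub>R g \<le> x"
    then have "d *\<^sub>R ((1 / d) *\<^sub>R g) \<le> d *\<^sub>R x" using d(1) by (intro scaleR_left_mono) simp_all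
    with d show False by simp
  qed
  then show ?thesis using d(1) by (intro that[of "1 / d"]) simp_all
qed

lemma exists_disjoint_cuts:
  fixes x :: 'a
  assumes G: "disjoint_system G" "\<And>g. g \<in> G \<Longrightarrow> g \<le> x" and x: "0 \<le> x"
  obtains h q where "\<And>g. g \<in> G \<Longrightarrow> 0 \<le> h g \<and> h g \<le> x" "sum h G \<le> x"
    "\<And>g. g \<in> G \<Longrightarrow> 0 \<le> q g \<and> q g \<noteq> 0 \<and> (\<forall>y. lat_disjoint x y \<longrightarrow> lat_disjoint (q g) y) \<and>
      inf (q g) (x - h g) = 0"
proof -
  have G_pos: "0 \<le> g" "g \<noteq> 0" if "g \<in> G" for g
    using G(1) that unfolding disjoint_system_def by auto
  have "\<forall>g\<in>G. \<exists>M. 0 < M \<and> \<not> M *\<^sub>R g \<le> x"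
    using exists_multiple_not_below G_pos by metis
  then obtain M where M: "\<And>g. g \<in> G \<Longrightarrow> 0 < M g" "\<And>g. g \<in> G \<Longrightarrow> \<not> M g *\<^sub>R g \<le> x"
    by metis
  define h where "h g = inf x (M g *\<^sub>R g)" for g
  define q where "q g = riesz.pprt (M g *\<^sub>R g - x)" for g
  have split: "0 \<le> h g" "h g \<le> x" "\<And>y. lat_disjoint g y \<Longrightarrow> lat_disjoint (h g) y"
    "0 \<le> q g" "q g \<noteq> 0" "\<And>y. lat_disjoint x y \<Longrightarrow> lat_disjoint (q g) y" "inf (q g) (x - h g) = 0"
    if "g \<in> G" for g
    using split_at_multiple[OF G_pos(1)[OF that] G(2)[OF that] M(1)[OF that] M(2)[OF that]]
    unfolding h_def q_def by blast+
  have "inf (h g) (h g') = 0" if "g \<in> G" "g' \<in> G" "g \<noteq> g'" for g g'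
  proof -
    have "lat_disjoint g g'"
      using G(1) that G_pos by (simp add: disjoint_system_def lat_disjoint_nonneg_iff)
    then have "lat_disjoint g' (h g)" using split(3)[OF that(1)] lat_disjoint_commute[THEN iffD1] by blast
    then have "lat_disjoint (h g') (h g)" using split(3)[OF that(2)] by blast
    then show ?thesis using split(1) that by (simp add: lat_disjoint_nonneg_iff inf_commute)
  qed
  then have "sum h G \<le> x"
    using G(1) split(1,2) x by (intro sum_le_of_disjoint) (auto simp: disjoint_system_def)
  with split show ?thesis by (intro that[of h q]) auto
qed

lemma sum_norm_defect_le:
  fixes h :: "'i \<Rightarrow> 'a"
  assumes "finite V" "\<And>v. v \<in> V \<Longrightarrow> 0 \<le> h v" "sum h V \<le> y"
  shows "(\<Sum>v\<in>V. norm y - norm (y - h v)) \<le> norm y"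
proof (cases "V = {}")
  case False
  define n where "n = real (card V)"
  have "0 < card V" using assms(1) False by (simp add: card_gt_0_iff)
  then have n: "1 \<le> n" by (simp add: n_def)
  have "0 \<le> sum h V" using assms(2) by (simp add: sum_nonneg)
  then have y: "0 \<le> y" using assms(3) by simp
  have "(n - 1) *\<^sub>R y \<le> (\<Sum>v\<in>V. y - h v)"
    using assms(3) by (simp add: sum_subtractf sum_constant_scaleR n_def algebra_simps)
  then have "norm ((n - 1) *\<^sub>R y) \<le> norm (\<Sum>v\<in>V. y - h v)"
    using n y by (intro norm_mono_nonneg scaleR_nonneg_nonneg) simp_all
  also have "\<dots> \<le> (\<Sum>v\<in>V. norm (y - h v))" by (rule norm_sum)
  finally have "(n - 1) * norm y \<le> (\<Sum>v\<in>V. norm (y - h v))" using n by simp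
  then show ?thesis by (simp add: sum_subtractf n_def algebra_simps)
qed simp

text \<open>Since the cuts \<open>h\<^sub>g\<close> are disjoint and lie below \<open>x\<close>, the norm defects caused by removing them
  sum to at most \<open>\<parallel>R + \<alpha> x\<parallel> + \<parallel>x\<parallel>\<close>; hence some cut has a small defect.\<close>

lemma exists_split_with_small_defect:
  fixes x R :: 'a
  assumes G: "disjoint_system G" "G \<noteq> {}" "\<And>g. g \<in> G \<Longrightarrow> g \<le> x" and x: "0 \<le> x"
    and R: "0 \<le> R" and \<alpha>: "0 \<le> \<alpha>"
  obtains p q where "0 \<le> p" "p \<le> x" "0 \<le> q" "q \<noteq> 0" "\<And>y. lat_disjoint x y \<Longrightarrow> lat_disjoint q y"
    "inf q p = 0"
    "(norm (R + \<alpha> *\<^sub>R x) - norm (R + \<alpha> *\<^sub>R p)) + (norm x - norm p)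
      \<le> (norm (R + \<alpha> *\<^sub>R x) + norm x) / card G"
proof -
  obtain h q where h: "\<And>g. g \<in> G \<Longrightarrow> 0 \<le> h g \<and> h g \<le> x" and sum_h: "sum h G \<le> x"
    and q: "\<And>g. g \<in> G \<Longrightarrow> 0 \<le> q g \<and> q g \<noteq> 0 \<and> (\<forall>y. lat_disjoint x y \<longrightarrow> lat_disjoint (q g) y) \<and>
      inf (q g) (x - h g) = 0"
    using exists_disjoint_cuts[OF G(1,3) x] by blast
  define y where "y = R + \<alpha> *\<^sub>R x"
  have "(\<Sum>g\<in>G. norm y - norm (y - \<alpha> *\<^sub>R h g)) \<le> norm y"
  proof (rule sum_norm_defect_le)
    have "(\<Sum>g\<in>G. \<alpha> *\<^sub>R h g) \<le> \<alpha> *\<^sub>R x"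
      using sum_h \<alpha> by (simp add: scaleR_sum_right[symmetric] scaleR_left_mono)
    also have "\<dots> \<le> y" using R by (simp add: y_def)
    finally show "(\<Sum>g\<in>G. \<alpha> *\<^sub>R h g) \<le> y" .
  qed (use G(1) h \<alpha> in \<open>auto simp: disjoint_system_def scaleR_nonneg_nonneg\<close>)
  moreover have "(\<Sum>g\<in>G. norm x - norm (x - h g)) \<le> norm x"
    by (rule sum_norm_defect_le[OF _ _ sum_h]) (use G(1) h in \<open>auto simp: disjoint_system_def\<close>)
  ultimately have "(\<Sum>g\<in>G. (norm y - norm (y - \<alpha> *\<^sub>R h g)) + (norm x - norm (x - h g)))
      \<le> norm y + norm x"
    by (simp add: sum.distrib)
  moreover have "finite G" using G(1) by (simp add: disjoint_system_def)
  ultimately obtain g where g: "g \<in> G"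
    "(norm y - norm (y - \<alpha> *\<^sub>R h g)) + (norm x - norm (x - h g)) \<le> (norm y + norm x) / card G"
    using exists_le_average[OF _ G(2)] by blast
  have "y - \<alpha> *\<^sub>R h g = R + \<alpha> *\<^sub>R (x - h g)" by (simp add: y_def algebra_simps)
  note defect = g(2)[unfolded this, unfolded y_def]
  show ?thesis
  proof (rule that[of "x - h g" "q g"])
  qed (use g(1) defect h[OF g(1)] q[OF g(1)] in simp_all)
qed

lemma norm_after_rescaling_close:
  fixes R p x :: 'a
  assumes R: "0 \<le> R" and \<alpha>: "0 \<le> \<alpha>" and p: "0 \<le> p" "p \<le> x" and x: "norm x = 1"
    and \<delta>: "\<delta> \<le> 1 / 2"
    and defect: "(norm (R + \<alpha> *\<^sub>R x) - norm (R + \<alpha> *\<^sub>R p)) + (norm x - norm p) \<le> \<delta>"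
  shows "\<bar>norm (R + (\<alpha> / norm p) *\<^sub>R p) - norm (R + \<alpha> *\<^sub>R x)\<bar> \<le> 2 * (norm (R + \<alpha> *\<^sub>R x) + 1) * \<delta>"
proof -
  define r where "r = norm p"
  define nF where "nF = norm (R + \<alpha> *\<^sub>R x)"
  have "norm (R + \<alpha> *\<^sub>R p) \<le> nF" "r \<le> 1"
    using R \<alpha> p x norm_mono_nonneg[of p x] unfolding nF_def r_def
    by (auto intro!: norm_mono_nonneg add_nonneg_nonneg scaleR_nonneg_nonneg scaleR_left_mono)
  with defect have d: "nF - norm (R + \<alpha> *\<^sub>R p) \<le> \<delta>" "1 - r \<le> \<delta>" and "0 \<le> \<delta>"
    unfolding nF_def r_def x by linarith+
  with \<delta> have r: "1 / 2 \<le> r" "0 < r" by linarith+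
  have "\<alpha> \<le> \<alpha> / r" using \<alpha> r \<open>r \<le> 1\<close> by (simp add: le_divide_eq mult_left_le)
  then have "R + \<alpha> *\<^sub>R p \<le> R + (\<alpha> / r) *\<^sub>R p"
    using p(1) by (intro add_left_mono scaleR_right_mono)
  then have "norm (R + \<alpha> *\<^sub>R p) \<le> norm (R + (\<alpha> / r) *\<^sub>R p)"
    by (rule norm_mono_nonneg[rotated]) (simp add: R \<alpha> p(1) add_nonneg_nonneg scaleR_nonneg_nonneg)
  with d(1) have lower: "nF - \<delta> \<le> norm (R + (\<alpha> / r) *\<^sub>R p)" by linarith
  have "R + (\<alpha> / r) *\<^sub>R p \<le> (1 / r) *\<^sub>R (R + \<alpha> *\<^sub>R x)"
  proof -
    have "R \<le> (1 / r) *\<^sub>R R" using R r \<open>r \<le> 1\<close> scaleR_right_mono[of 1 "1 / r" R] by simp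
    moreover have "(\<alpha> / r) *\<^sub>R p \<le> (\<alpha> / r) *\<^sub>R x" using \<alpha> r p(2) by (simp add: scaleR_left_mono)
    ultimately show ?thesis by (simp add: scaleR_add_right add_mono)
  qed
  then have "norm (R + (\<alpha> / r) *\<^sub>R p) \<le> norm ((1 / r) *\<^sub>R (R + \<alpha> *\<^sub>R x))"
    by (rule norm_mono_nonneg[rotated], intro add_nonneg_nonneg scaleR_nonneg_nonneg)
      (use R \<alpha> p(1) r in simp_all)
  then have "norm (R + (\<alpha> / r) *\<^sub>R p) \<le> nF / r" using r by (simp add: nF_def)
  moreover have "nF / r - nF \<le> 2 * nF * \<delta>"
  proof -
    have "nF / r - nF = nF * ((1 - r) / r)" using r by (simp add: field_simps)
    also have "\<dots> \<le> nF * (2 * \<delta>)"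
    proof (rule mult_left_mono)
      have "\<delta> \<le> 2 * \<delta> * r" using r(1) \<open>0 \<le> \<delta>\<close> mult_left_mono[of "1 / 2" r "2 * \<delta>"] by simp
      then show "(1 - r) / r \<le> 2 * \<delta>" using d(2) r(2) by (simp add: divide_le_eq)
    qed (simp add: nF_def)
    finally show ?thesis by simp
  qed
  ultimately show ?thesis
    using lower \<open>0 \<le> \<delta>\<close> unfolding r_def[symmetric] nF_def[symmetric]
    by (simp add: abs_le_iff algebra_simps nF_def)
qed

lemma extend_unit_disjoint_on_by_splitting:
  fixes z :: "'i \<Rightarrow> 'a" and a :: "'i \<Rightarrow> real"
  assumes S: "finite S" "t \<notin> S" "A \<subseteq> S" and z: "unit_disjoint_on S z" and j: "j \<in> S"
    and G: "disjoint_system G" "G \<noteq> {}" "\<And>g. g \<in> G \<Longrightarrow> g \<le> lat_abs (z j)"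
    and \<delta>: "\<delta> \<le> 1 / 2" "(norm (\<Sum>i\<in>A. a i *\<^sub>R z i) + 1) / card G \<le> \<delta>"
  shows "\<exists>w::'i \<Rightarrow> 'a. unit_disjoint_on (insert t S) w \<and>
    \<bar>norm (\<Sum>i\<in>A. a i *\<^sub>R w i) - norm (\<Sum>i\<in>A. a i *\<^sub>R z i)\<bar> \<le> 2 * (norm (\<Sum>i\<in>A. a i *\<^sub>R z i) + 1) * \<delta>"
proof -
  have A: "finite A" "t \<notin> A" using S finite_subset by auto
  define nF where "nF = norm (\<Sum>i\<in>A. a i *\<^sub>R z i)"
  define x where "x = lat_abs (z j)"
  define \<alpha> where "\<alpha> = (if j \<in> A then \<bar>a j\<bar> else 0)"
  define R where "R = (\<Sum>i\<in>A - {j}. \<bar>a i\<bar> *\<^sub>R lat_abs (z i))"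
  have R: "0 \<le> R" by (simp add: R_def sum_nonneg scaleR_nonneg_nonneg lat_abs_nonneg)
  have \<alpha>: "0 \<le> \<alpha>" by (simp add: \<alpha>_def)
  have x: "norm x = 1" using z j by (simp add: x_def unit_disjoint_on_def norm_lat_abs)
  have "lat_disjoint_on A z" using unit_disjoint_on_subset[OF z S(3)] by (simp add: unit_disjoint_on_def)
  then have nF_eq: "nF = norm (R + \<alpha> *\<^sub>R x)"
    unfolding nF_def R_def \<alpha>_def x_def by (rule norm_sum_of_disjoint_split_at[OF A(1)])
  obtain p q where p: "0 \<le> p" "p \<le> x" and q: "0 \<le> q" "q \<noteq> 0" "\<And>y. lat_disjoint x y \<Longrightarrow> lat_disjoint q y"
    and pq: "inf q p = 0"
    and defect: "(norm (R + \<alpha> *\<^sub>R x) - norm (R + \<alpha> *\<^sub>R p)) + (norm x - norm p)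
      \<le> (norm (R + \<alpha> *\<^sub>R x) + norm x) / card G"
    by (rule exists_split_with_small_defect[OF G(1,2) _ _ R \<alpha>]) (use G(3) in \<open>auto simp: x_def lat_abs_nonneg\<close>)
  have small_defect: "(norm (R + \<alpha> *\<^sub>R x) - norm (R + \<alpha> *\<^sub>R p)) + (norm x - norm p) \<le> \<delta>"
    using defect \<delta>(2)[folded nF_def] unfolding nF_eq x by simp
  have "R + \<alpha> *\<^sub>R p \<le> R + \<alpha> *\<^sub>R x" using p(2) \<alpha> by (intro add_left_mono scaleR_left_mono)
  then have "norm (R + \<alpha> *\<^sub>R p) \<le> norm (R + \<alpha> *\<^sub>R x)"
    by (rule norm_mono_nonneg[rotated]) (simp add: R \<alpha> p(1) add_nonneg_nonneg scaleR_nonneg_nonneg)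
  then have "p \<noteq> 0" using small_defect \<delta>(1) x by (intro notI) simp
  define w where "w = z(j := (1 / norm p) *\<^sub>R p, t := (1 / norm q) *\<^sub>R q)"
  have w: "unit_disjoint_on (insert t S) w"
    unfolding w_def using p q pq \<open>p \<noteq> 0\<close> unfolding x_def by (intro unit_disjoint_on_split[OF z j S(2)])
  have "lat_disjoint_on A w" using unit_disjoint_on_subset[OF w, of A] S(3) by (auto simp: unit_disjoint_on_def)
  then have "norm (\<Sum>i\<in>A. a i *\<^sub>R w i)
      = norm ((\<Sum>i\<in>A - {j}. \<bar>a i\<bar> *\<^sub>R lat_abs (w i)) + \<alpha> *\<^sub>R lat_abs (w j))"
    unfolding \<alpha>_def by (rule norm_sum_of_disjoint_split_at[OF A(1)])
  also have "(\<Sum>i\<in>A - {j}. \<bar>a i\<bar> *\<^sub>R lat_abs (w i)) = R"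
    unfolding R_def using A(2) by (intro sum.cong) (auto simp: w_def)
  also have "\<alpha> *\<^sub>R lat_abs (w j) = (\<alpha> / norm p) *\<^sub>R p"
    using S(2) j p(1) by (auto simp: w_def lat_abs_of_nonneg scaleR_nonneg_nonneg)
  finally have "norm (\<Sum>i\<in>A. a i *\<^sub>R w i) = norm (R + (\<alpha> / norm p) *\<^sub>R p)" .
  moreover have "\<bar>norm (R + (\<alpha> / norm p) *\<^sub>R p) - nF\<bar> \<le> 2 * (nF + 1) * \<delta>"
    unfolding nF_eq by (rule norm_after_rescaling_close[OF R \<alpha> p x \<delta>(1) small_defect])
  ultimately have "\<bar>norm (\<Sum>i\<in>A. a i *\<^sub>R w i) - nF\<bar> \<le> 2 * (nF + 1) * \<delta>" by simp
  with w show ?thesis unfolding nF_def by blast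
qed

lemma Phi_n_mono_dim:
  assumes "n \<le> n'"
  shows "Phi_n TYPE('a) n b \<le> Phi_n TYPE('a) n' b"
  unfolding Phi_n_def[of _ n']
proof (rule INF_greatest)
  fix x assume "x \<in> disj_tuples TYPE('a) n'"
  then have x: "unit_disjoint_on {..<n'} x" by (simp add: disj_tuples_iff)
  then have "Phi_n TYPE('a) n b \<le> ereal (norm (\<Sum>i<n. b i *\<^sub>R x i))"
    using assms by (intro Phi_n_le_norm unit_disjoint_on_subset[OF x]) simp
  also have "\<dots> \<le> ereal (norm (\<Sum>i<n'. b i *\<^sub>R x i))"
    using x assms by (simp add: norm_sum_of_disjoint_subset unit_disjoint_on_def)
  finally show "Phi_n TYPE('a) n b \<le> ereal (norm (\<Sum>i<n'. b i *\<^sub>R x i))" .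
qed

lemma XL_n_mono_dim:
  assumes "n \<le> n'"
  shows "XL_n TYPE('a) n b \<le> XL_n TYPE('a) n' b"
  unfolding XL_n_def[of _ n']
proof (rule Inf_greatest, clarify)
  fix K :: nat and c :: "nat \<Rightarrow> nat \<Rightarrow> real"
  assume "\<forall>i<n'. b i = (\<Sum>k<K. c k i)"
  then have "XL_n TYPE('a) n b \<le> (\<Sum>k<K. Phi_n TYPE('a) n (c k))"
    using assms by (intro XL_n_le_decomposition) simp
  also have "\<dots> \<le> (\<Sum>k<K. Phi_n TYPE('a) n' (c k))" by (intro sum_mono Phi_n_mono_dim assms)
  finally show "XL_n TYPE('a) n b \<le> (\<Sum>k<K. Phi_n TYPE('a) n' (c k))" .
qed

lemma Phi_n_mono_coeffs:
  assumes "\<And>i. i < n \<Longrightarrow> \<bar>b' i\<bar> \<le> \<bar>b i\<bar>"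
  shows "Phi_n TYPE('a) n b' \<le> Phi_n TYPE('a) n b"
  unfolding Phi_n_def
proof (rule INF_mono)
  fix x assume x: "x \<in> disj_tuples TYPE('a) n"
  then have "norm (\<Sum>i<n. b' i *\<^sub>R x i) \<le> norm (\<Sum>i<n. b i *\<^sub>R x i)"
    using assms by (intro norm_sum_of_disjoint_mono) (auto simp: disj_tuples_iff unit_disjoint_on_def)
  with x show "\<exists>x'\<in>disj_tuples TYPE('a) n. ereal (norm (\<Sum>i<n. b' i *\<^sub>R x' i)) \<le> ereal (norm (\<Sum>i<n. b i *\<^sub>R x i))"
    by auto
qed

lemma XL_n_le_of_dominated:
  fixes K :: nat and D :: "nat \<Rightarrow> nat \<Rightarrow> real"
  assumes "\<And>i. i < n \<Longrightarrow> 0 \<le> d i \<and> d i \<le> (\<Sum>k<K. D k i)" "\<And>k i. 0 \<le> D k i"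
  shows "XL_n TYPE('a) n d \<le> (\<Sum>k<K. Phi_n TYPE('a) n (D k))"
proof -
  define \<theta> where "\<theta> i = d i / (\<Sum>k<K. D k i)" for i
  have \<theta>: "0 \<le> \<theta> i" "\<theta> i \<le> 1" if "i < n" for i
    using assms(1)[OF that] by (auto simp: \<theta>_def divide_le_eq_1)
  have "d i = (\<Sum>k<K. \<theta> i * D k i)" if "i < n" for i
  proof -
    have "(\<Sum>k<K. \<theta> i * D k i) = \<theta> i * (\<Sum>k<K. D k i)" by (rule sum_distrib_left[symmetric])
    then show ?thesis using assms(1)[OF that] by (cases "(\<Sum>k<K. D k i) = 0") (simp_all add: \<theta>_def)
  qed
  then have "\<forall>i<n. d i = (\<Sum>k<K. \<theta> i * D k i)" by blast
  then have "XL_n TYPE('a) n d \<le> (\<Sum>k<K. Phi_n TYPE('a) n (\<lambda>i. \<theta> i * D k i))"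
    by (rule XL_n_le_decomposition)
  also have "\<dots> \<le> (\<Sum>k<K. Phi_n TYPE('a) n (D k))"
    using \<theta> assms(2) by (intro sum_mono Phi_n_mono_coeffs) (simp add: abs_mult mult_left_le_one_le)
  finally show ?thesis .
qed

text \<open>Restricting a decomposition of \<open>\<Sum>\<^sub>k u\<^sub>k\<close> to the support of \<open>u\<^sub>k\<close> decomposes \<open>u\<^sub>k\<close>.\<close>

lemma XL_n_le_restricted_decomposition:
  fixes K :: nat and b :: "nat \<Rightarrow> nat \<Rightarrow> real" and xs :: "nat \<Rightarrow> nat \<Rightarrow> 'a"
  assumes u: "disj_supported m u" "k < m" and dec: "\<forall>i<N. (\<Sum>k<m. u k i) = (\<Sum>j<K. b j i)"
    and xs: "\<And>j. unit_disjoint_on {..<N} (xs j)"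
  shows "XL_n TYPE('a) N (u k) \<le> ereal (\<Sum>j<K. norm (\<Sum>i<N. (if u k i \<noteq> 0 then b j i else 0) *\<^sub>R xs j i))"
proof -
  have "u k i = (\<Sum>j<K. if u k i \<noteq> 0 then b j i else 0)" if "i < N" for i
    using dec that sum_disj_supported_eq[OF u, of i] by (cases "u k i = 0") auto
  then have "\<forall>i<N. u k i = (\<Sum>j<K. if u k i \<noteq> 0 then b j i else 0)" by blast
  then have "XL_n TYPE('a) N (u k) \<le> (\<Sum>j<K. Phi_n TYPE('a) N (\<lambda>i. if u k i \<noteq> 0 then b j i else 0))"
    by (rule XL_n_le_decomposition)
  also have "\<dots> \<le> (\<Sum>j<K. ereal (norm (\<Sum>i<N. (if u k i \<noteq> 0 then b j i else 0) *\<^sub>R xs j i)))"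
    by (intro sum_mono Phi_n_le_norm xs)
  finally show ?thesis by (simp add: sum_ereal)
qed

section \<open>Infinite-dimensional Banach lattices\<close>

context
  assumes ID: "infinite_dimensional TYPE('a)"
begin

lemma exists_disjoint_system_card: "\<exists>V::'a set. disjoint_system V \<and> card V = N"
proof (induction N)
  case 0
  show ?case using disjoint_system_empty by (intro exI[of _ "{}"]) simp
next
  case (Suc N)
  then obtain V :: "'a set" where V: "disjoint_system V" "card V = N" by blast
  show ?case
  proof (rule ccontr)
    assume "\<not> ?case"
    with V have "span V = UNIV" by (intro span_maximal_disjoint_system) simp_all
    moreover have "finite V" using V(1) by (simp add: disjoint_system_def)
    ultimately show False using ID unfolding infinite_dimensional_def by blast
  qed
qed

lemma exists_large_disjoint_system_below:
  fixes z :: "'i \<Rightarrow> 'a"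
  assumes S: "finite S"
    and no_disjoint: "\<And>y. (\<And>i. i \<in> S \<Longrightarrow> lat_disjoint y (z i)) \<Longrightarrow> y = 0"
  shows "\<exists>j\<in>S. \<exists>G. disjoint_system G \<and> N \<le> card G \<and> (\<forall>g\<in>G. g \<le> lat_abs (z j))"
proof -
  have "S \<noteq> {}"
  proof
    assume "S = {}"
    then have "span {} = (UNIV :: 'a set)" using no_disjoint by auto
    with ID show False unfolding infinite_dimensional_def by blast
  qed
  obtain V :: "'a set" where V: "disjoint_system V" "card V = N * card S"
    using exists_disjoint_system_card by blast
  have V_pos: "0 \<le> v" "v \<noteq> 0" if "v \<in> V" for v
    using V(1) that unfolding disjoint_system_def by auto
  have "\<exists>j\<in>S. inf v (lat_abs (z j)) \<noteq> 0" if "v \<in> V" for v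
  proof (rule ccontr)
    assume "\<not> ?thesis"
    then have "lat_disjoint v (z i)" if "i \<in> S" for i
      using that V_pos[OF \<open>v \<in> V\<close>] by (simp add: lat_disjoint_def lat_abs_of_nonneg)
    then show False using no_disjoint V_pos[OF that] by blast
  qed
  then have "\<exists>jf. \<forall>v\<in>V. jf v \<in> S \<and> inf v (lat_abs (z (jf v))) \<noteq> 0" by (intro bchoice) blast
  then obtain jf where jf: "\<And>v. v \<in> V \<Longrightarrow> jf v \<in> S \<and> inf v (lat_abs (z (jf v))) \<noteq> 0"
    by blast
  have "finite V" using V(1) by (simp add: disjoint_system_def)
  then obtain j where j: "j \<in> S" "card V \<le> card (jf -` {j} \<inter> V) * card S"
    using pigeonhole_card[of jf V S] jf S \<open>S \<noteq> {}\<close> by auto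
  define Vj where "Vj = jf -` {j} \<inter> V"
  define G where "G = (\<lambda>v. inf v (lat_abs (z j))) ` Vj"
  have Vj: "disjoint_system Vj" using V(1) by (rule disjoint_system_subset) (simp add: Vj_def)
  have meets: "inf v (lat_abs (z j)) \<noteq> 0" if "v \<in> Vj" for v using that jf unfolding Vj_def by auto
  have "disjoint_system G" "card G = card Vj"
    unfolding G_def using disjoint_system_inf_image[OF Vj lat_abs_nonneg meets] by simp_all
  moreover have "N \<le> card Vj" using j \<open>S \<noteq> {}\<close> S V(2) by (simp add: Vj_def card_gt_0_iff)
  moreover have "\<forall>g\<in>G. g \<le> lat_abs (z j)" unfolding G_def by simp
  ultimately have "disjoint_system G \<and> N \<le> card G \<and> (\<forall>g\<in>G. g \<le> lat_abs (z j))" by simp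
  with j(1) show ?thesis by blast
qed

lemma extend_unit_disjoint_on_by_split:
  fixes z :: "'i \<Rightarrow> 'a" and a :: "'i \<Rightarrow> real"
  assumes S: "finite S" "t \<notin> S" "A \<subseteq> S"
    and z: "unit_disjoint_on S z" and no_disjoint: "\<And>y. (\<And>i. i \<in> S \<Longrightarrow> lat_disjoint y (z i)) \<Longrightarrow> y = 0"
    and e: "0 < e"
  shows "\<exists>w::'i \<Rightarrow> 'a. unit_disjoint_on (insert t S) w \<and>
    \<bar>norm (\<Sum>i\<in>A. a i *\<^sub>R w i) - norm (\<Sum>i\<in>A. a i *\<^sub>R z i)\<bar> \<le> e"
proof -
  define nF where "nF = norm (\<Sum>i\<in>A. a i *\<^sub>R z i)"
  define \<delta> where "\<delta> = min (1 / 2) (e / (2 * (nF + 1)))"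
  have nF: "0 \<le> nF" by (simp add: nF_def)
  have "2 * (nF + 1) * \<delta> \<le> 2 * (nF + 1) * (e / (2 * (nF + 1)))"
    using nF by (intro mult_left_mono) (simp_all add: \<delta>_def)
  moreover have "0 < \<delta>" using e nF by (simp add: \<delta>_def)
  moreover have "\<delta> \<le> 1 / 2" unfolding \<delta>_def by (rule min.cobounded1)
  ultimately have \<delta>: "0 < \<delta>" "\<delta> \<le> 1 / 2" "2 * (nF + 1) * \<delta> \<le> e" using nF by simp_all
  obtain j G where j: "j \<in> S" and G: "disjoint_system G" "nat \<lceil>(nF + 1) / \<delta>\<rceil> \<le> card G"
    "\<forall>g\<in>G. g \<le> lat_abs (z j)"
    using exists_large_disjoint_system_below[OF S(1) no_disjoint] by blast
  have card_G_ge: "(nF + 1) / \<delta> \<le> card G" using G(2) by linarith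
  moreover have "0 < (nF + 1) / \<delta>" using \<delta>(1) nF by simp
  ultimately have "0 < real (card G)" by linarith
  moreover have "nF + 1 \<le> \<delta> * card G"
    using card_G_ge \<delta>(1) by (simp add: divide_le_eq mult.commute)
  ultimately have card_G: "(nF + 1) / card G \<le> \<delta>" "G \<noteq> {}"
    by (auto simp: divide_le_eq mult.commute)
  with extend_unit_disjoint_on_by_splitting[OF S z j G(1) _ _ \<delta>(2), of a] G(3) \<delta>(3)
  show ?thesis unfolding nF_def by fastforce
qed

lemma extend_unit_disjoint_on_insert:
  fixes z :: "'i \<Rightarrow> 'a" and a :: "'i \<Rightarrow> real"
  assumes S: "finite S" "t \<notin> S" "A \<subseteq> S" and z: "unit_disjoint_on S z" and e: "0 < e"
  shows "\<exists>w::'i \<Rightarrow> 'a. unit_disjoint_on (insert t S) w \<and>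
    \<bar>norm (\<Sum>i\<in>A. a i *\<^sub>R w i) - norm (\<Sum>i\<in>A. a i *\<^sub>R z i)\<bar> \<le> e"
proof (cases "\<exists>y::'a. y \<noteq> 0 \<and> (\<forall>i\<in>S. lat_disjoint y (z i))")
  case True
  then obtain y :: 'a where y: "y \<noteq> 0" "\<And>i. i \<in> S \<Longrightarrow> lat_disjoint y (z i)" by blast
  have "(\<Sum>i\<in>A. a i *\<^sub>R (z(t := (1 / norm y) *\<^sub>R y)) i) = (\<Sum>i\<in>A. a i *\<^sub>R z i)"
    using S by (intro sum.cong) auto
  with unit_disjoint_on_update[OF z S(2) y] e show ?thesis by (intro exI[of _ "z(t := (1 / norm y) *\<^sub>R y)"]) simp
next
  case False
  then show ?thesis by (intro extend_unit_disjoint_on_by_split[OF S z _ e]) blast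
qed

lemma extend_unit_disjoint_on:
  fixes z :: "'i \<Rightarrow> 'a" and a :: "'i \<Rightarrow> real"
  assumes "finite T" "S \<subseteq> T" "unit_disjoint_on S z" "A \<subseteq> S" "0 < e"
  shows "\<exists>w::'i \<Rightarrow> 'a. unit_disjoint_on T w \<and>
    \<bar>norm (\<Sum>i\<in>A. a i *\<^sub>R w i) - norm (\<Sum>i\<in>A. a i *\<^sub>R z i)\<bar> \<le> e"
  using assms(2-)
proof (induction "card (T - S)" arbitrary: S z e)
  case 0
  then have "S = T" using assms(1) by (simp add: finite_subset)
  with 0 show ?case by (intro exI[of _ z]) simp
next
  case (Suc n)
  then have "T - S \<noteq> {}" by auto
  then obtain t where t: "t \<in> T" "t \<notin> S" by blast
  have "finite S" "0 < e / 2" using Suc.prems(1,4) assms(1) finite_subset by auto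
  then obtain w1 :: "'i \<Rightarrow> 'a" where w1: "unit_disjoint_on (insert t S) w1"
    "\<bar>norm (\<Sum>i\<in>A. a i *\<^sub>R w1 i) - norm (\<Sum>i\<in>A. a i *\<^sub>R z i)\<bar> \<le> e / 2"
    using extend_unit_disjoint_on_insert[OF _ t(2) Suc.prems(3,2)] by blast
  have "T - insert t S = (T - S) - {t}" by blast
  then have "n = card (T - insert t S)" using Suc.hyps(2) t by (simp add: card_Diff_singleton)
  then obtain w :: "'i \<Rightarrow> 'a" where w: "unit_disjoint_on T w"
    "\<bar>norm (\<Sum>i\<in>A. a i *\<^sub>R w i) - norm (\<Sum>i\<in>A. a i *\<^sub>R w1 i)\<bar> \<le> e / 2"
    using Suc.hyps(1)[of "insert t S" w1 "e / 2"] w1(1) t(1) Suc.prems by auto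
  have "\<bar>norm (\<Sum>i\<in>A. a i *\<^sub>R w i) - norm (\<Sum>i\<in>A. a i *\<^sub>R z i)\<bar> \<le> e"
    using w(2) w1(2) by linarith
  with w(1) show ?case by blast
qed

lemma exists_unit_disjoint_on: "finite T \<Longrightarrow> \<exists>w::'i \<Rightarrow> 'a. unit_disjoint_on T w"
  using extend_unit_disjoint_on[of T "{}" "\<lambda>_. 0" "{}" 1] by (auto simp: unit_disjoint_on_def lat_disjoint_on_def)

text \<open>Normalizing the blocks \<open>\<Sum>\<^sub>i \<beta> k i x\<^sub>i\<close> and re-embedding them into a longer disjoint tuple.\<close>

lemma disjoint_blocks_approximation:
  fixes x :: "nat \<Rightarrow> 'a" and \<beta> :: "nat \<Rightarrow> nat \<Rightarrow> real"
  assumes x: "unit_disjoint_on {..<n} x" and \<beta>: "disj_supported m \<beta>" and "m \<le> M" and e: "0 < e"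
  shows "\<exists>w::nat \<Rightarrow> 'a. unit_disjoint_on {..<M} w \<and>
    \<bar>norm (\<Sum>k<m. norm (\<Sum>i<n. \<beta> k i *\<^sub>R x i) *\<^sub>R w k) - norm (\<Sum>i<n. (\<Sum>k<m. \<beta> k i) *\<^sub>R x i)\<bar> \<le> e"
proof -
  define y where "y k = (\<Sum>i<n. \<beta> k i *\<^sub>R x i)" for k
  define S where "S = {k. k < m \<and> y k \<noteq> 0}"
  define z where "z k = (1 / norm (y k)) *\<^sub>R y k" for k
  have S: "S \<subseteq> {..<m}" by (auto simp: S_def)
  have "lat_disjoint (y k) (y k')" if "k < m" "k' < m" "k \<noteq> k'" for k k'
    unfolding y_def using x \<beta> that
    by (intro lat_disjoint_sums_of_disjoint_coeffs) (auto simp: unit_disjoint_on_def disj_supported_def)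
  then have "unit_disjoint_on S z"
    by (auto simp: unit_disjoint_on_def lat_disjoint_on_def S_def z_def lat_disjoint_scaleR)
  then obtain w :: "nat \<Rightarrow> 'a" where w: "unit_disjoint_on {..<M} w"
    and close: "\<bar>norm (\<Sum>k\<in>S. norm (y k) *\<^sub>R w k) - norm (\<Sum>k\<in>S. norm (y k) *\<^sub>R z k)\<bar> \<le> e"
    using extend_unit_disjoint_on[OF _ _ _ subset_refl e, of "{..<M}" S] S \<open>m \<le> M\<close> by fastforce
  have "(\<Sum>k\<in>S. norm (y k) *\<^sub>R w k) = (\<Sum>k<m. norm (y k) *\<^sub>R w k)"
    using S by (intro sum.mono_neutral_left) (auto simp: S_def)
  moreover have "(\<Sum>k\<in>S. norm (y k) *\<^sub>R z k) = (\<Sum>k<m. y k)"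
    using S by (intro sum.mono_neutral_cong_left) (auto simp: S_def z_def)
  moreover have "(\<Sum>k<m. y k) = (\<Sum>i<n. (\<Sum>k<m. \<beta> k i) *\<^sub>R x i)"
    unfolding y_def scaleR_sum_left by (rule sum.swap)
  ultimately show ?thesis using w close unfolding y_def by auto
qed

lemma XU_norm_sum_disj_supported_le:
  assumes u: "disj_supported m u" "\<forall>k<m. u k \<in> XU TYPE('a)"
  shows "XU_norm TYPE('a) (\<lambda>i. \<Sum>k<m. u k i)
    \<le> XU_norm TYPE('a) (\<lambda>i. \<Sum>k<m. real_of_ereal (XU_norm TYPE('a) (u k)) * unit_vec k i)"
proof -
  define c where "c k = real_of_ereal (XU_norm TYPE('a) (u k))" for k
  define d where "d i = (\<Sum>k<m. c k * unit_vec k i)" for i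
  have c0: "0 \<le> c k" for k unfolding c_def by (rule real_of_ereal_pos[OF XU_norm_nonneg])
  have c: "ereal (c k) = XU_norm TYPE('a) (u k)" if "k < m" for k
    using u(2) that unfolding c_def XU_def by (intro real_of_ereal_nonneg_finite XU_norm_nonneg) simp
  have "ereal (norm (\<Sum>i<n. (\<Sum>k<m. u k i) *\<^sub>R x i)) \<le> XU_norm TYPE('a) d"
    if x: "unit_disjoint_on {..<n} x" for n and x :: "nat \<Rightarrow> 'a"
  proof (rule ereal_le_epsilon2)
    fix e :: real assume "0 < e"
    then obtain w :: "nat \<Rightarrow> 'a" where w: "unit_disjoint_on {..<m} w"
      and close: "\<bar>norm (\<Sum>k<m. norm (\<Sum>i<n. u k i *\<^sub>R x i) *\<^sub>R w k) - norm (\<Sum>i<n. (\<Sum>k<m. u k i) *\<^sub>R x i)\<bar> \<le> e"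
      using disjoint_blocks_approximation[OF x u(1) order_refl] by blast
    have "ereal (norm (\<Sum>i<n. u k i *\<^sub>R x i)) \<le> ereal (c k)" if "k < m" for k
      using norm_le_XU_n[OF x] XU_n_le_XU_norm c[OF that] order_trans by metis
    then have "norm (\<Sum>k<m. norm (\<Sum>i<n. u k i *\<^sub>R x i) *\<^sub>R w k) \<le> norm (\<Sum>k<m. c k *\<^sub>R w k)"
      using w c0 by (intro norm_sum_of_disjoint_mono) (auto simp: unit_disjoint_on_def)
    also have "(\<Sum>k<m. c k *\<^sub>R w k) = (\<Sum>i<m. d i *\<^sub>R w i)" by (simp add: d_def sum_unit_vec)
    finally have "norm (\<Sum>i<n. (\<Sum>k<m. u k i) *\<^sub>R x i) \<le> norm (\<Sum>i<m. d i *\<^sub>R w i) + e"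
      using close by linarith
    moreover have "ereal (norm (\<Sum>i<m. d i *\<^sub>R w i)) \<le> XU_norm TYPE('a) d"
      using norm_le_XU_n[OF w, of d] XU_n_le_XU_norm[of "TYPE('a)" m d] by (rule order_trans)
    ultimately have "ereal (norm (\<Sum>i<n. (\<Sum>k<m. u k i) *\<^sub>R x i))
        \<le> ereal (norm (\<Sum>i<m. d i *\<^sub>R w i)) + ereal e" by simp
    also have "\<dots> \<le> XU_norm TYPE('a) d + e" by (rule add_right_mono) fact
    finally show "ereal (norm (\<Sum>i<n. (\<Sum>k<m. u k i) *\<^sub>R x i)) \<le> XU_norm TYPE('a) d + e" .
  qed
  then show ?thesis
    unfolding XU_norm_def[of _ "\<lambda>i. \<Sum>k<m. u k i"] XU_n_def d_def c_def
    by (intro SUP_least) (simp add: disj_tuples_iff)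
qed

lemma Phi_n_le_sum_abs: "Phi_n TYPE('a) n b \<le> ereal (\<Sum>i<n. \<bar>b i\<bar>)"
proof -
  obtain w :: "nat \<Rightarrow> 'a" where w: "unit_disjoint_on {..<n} w"
    using exists_unit_disjoint_on by blast
  have "norm (\<Sum>i<n. b i *\<^sub>R w i) \<le> (\<Sum>i<n. norm (b i *\<^sub>R w i))" by (rule norm_sum)
  also have "\<dots> = (\<Sum>i<n. \<bar>b i\<bar>)" using w by (simp add: unit_disjoint_on_def)
  finally show ?thesis using Phi_n_le_norm[OF w, of b] by (simp add: order_trans)
qed

lemma Phi_n_blocks_le:
  fixes x :: "nat \<Rightarrow> 'a" and \<beta> :: "nat \<Rightarrow> nat \<Rightarrow> real"
  assumes x: "unit_disjoint_on {..<N} x" and \<beta>: "disj_supported m \<beta>"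
    and b: "\<And>i. i < N \<Longrightarrow> \<bar>\<Sum>k<m. \<beta> k i\<bar> \<le> \<bar>b i\<bar>"
  shows "Phi_n TYPE('a) M (\<lambda>k. if k < m then norm (\<Sum>i<N. \<beta> k i *\<^sub>R x i) else 0)
    \<le> ereal (norm (\<Sum>i<N. b i *\<^sub>R x i))"
proof (rule ereal_le_epsilon2)
  fix e :: real assume "0 < e"
  define C where "C k = (if k < m then norm (\<Sum>i<N. \<beta> k i *\<^sub>R x i) else 0)" for k
  obtain w :: "nat \<Rightarrow> 'a" where w: "unit_disjoint_on {..<max M m} w" and
    close: "\<bar>norm (\<Sum>k<m. norm (\<Sum>i<N. \<beta> k i *\<^sub>R x i) *\<^sub>R w k) - norm (\<Sum>i<N. (\<Sum>k<m. \<beta> k i) *\<^sub>R x i)\<bar> \<le> e"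
    using disjoint_blocks_approximation[OF x \<beta> _ \<open>0 < e\<close>, of "max M m"] by auto
  have "Phi_n TYPE('a) M C \<le> ereal (norm (\<Sum>i<M. C i *\<^sub>R w i))"
    by (rule Phi_n_le_norm, rule unit_disjoint_on_subset[OF w]) auto
  also have "norm (\<Sum>i<M. C i *\<^sub>R w i) \<le> norm (\<Sum>i<max M m. C i *\<^sub>R w i)"
    using w by (intro norm_sum_of_disjoint_subset) (auto simp: unit_disjoint_on_def)
  also have "(\<Sum>i<max M m. C i *\<^sub>R w i) = (\<Sum>k<m. norm (\<Sum>i<N. \<beta> k i *\<^sub>R x i) *\<^sub>R w k)"
    by (rule sum.mono_neutral_cong_right) (auto simp: C_def)
  also have "norm \<dots> \<le> norm (\<Sum>i<N. (\<Sum>k<m. \<beta> k i) *\<^sub>R x i) + e" using close by linarith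
  also have "norm (\<Sum>i<N. (\<Sum>k<m. \<beta> k i) *\<^sub>R x i) \<le> norm (\<Sum>i<N. b i *\<^sub>R x i)"
    using x b by (intro norm_sum_of_disjoint_mono) (auto simp: unit_disjoint_on_def)
  finally show "Phi_n TYPE('a) M C \<le> ereal (norm (\<Sum>i<N. b i *\<^sub>R x i)) + ereal e" by simp
qed

lemma Phi_n_restricted_blocks_le:
  fixes x :: "nat \<Rightarrow> 'a"
  assumes x: "unit_disjoint_on {..<N} x" and u: "disj_supported m u"
  shows "Phi_n TYPE('a) M (\<lambda>k. if k < m then norm (\<Sum>i<N. (if u k i \<noteq> 0 then b i else 0) *\<^sub>R x i) else 0)
    \<le> ereal (norm (\<Sum>i<N. b i *\<^sub>R x i))"
proof (rule Phi_n_blocks_le[OF x])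
  show \<beta>: "disj_supported m (\<lambda>k i. if u k i \<noteq> 0 then b i else 0)"
    using u by (auto simp: disj_supported_def)
  show "\<bar>\<Sum>k<m. if u k i \<noteq> 0 then b i else 0\<bar> \<le> \<bar>b i\<bar>" for i
  proof (cases "\<exists>k<m. u k i \<noteq> 0 \<and> b i \<noteq> 0")
    case True
    then obtain k where "k < m" "u k i \<noteq> 0" "b i \<noteq> 0" by blast
    then show ?thesis using sum_disj_supported_eq[OF \<beta>, of k i] by simp
  next
    case False
    then have "(\<Sum>k<m. if u k i \<noteq> 0 then b i else 0) = 0" by (intro sum.neutral) auto
    then show ?thesis by simp
  qed
qed

lemma XL_n_le_of_dominated_plus_const:
  fixes K m :: nat and C :: "nat \<Rightarrow> nat \<Rightarrow> real" and e :: real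
  assumes d: "\<And>i. i < M \<Longrightarrow> 0 \<le> d i \<and> d i \<le> (\<Sum>j<K. C j i) + (if i < m then e else 0)"
    and C: "\<And>j i. 0 \<le> C j i" and e: "0 \<le> e"
  shows "XL_n TYPE('a) M d \<le> (\<Sum>j<K. Phi_n TYPE('a) M (C j)) + ereal (real m * e)"
proof -
  define D where "D j = (if j < K then C j else (\<lambda>i. if i < m then e else 0))" for j
  have "XL_n TYPE('a) M d \<le> (\<Sum>j<Suc K. Phi_n TYPE('a) M (D j))"
    using d C e by (intro XL_n_le_of_dominated) (simp_all add: D_def)
  also have "\<dots> = (\<Sum>j<K. Phi_n TYPE('a) M (C j)) + Phi_n TYPE('a) M (\<lambda>i. if i < m then e else 0)"
    by (simp add: D_def)
  also have "Phi_n TYPE('a) M (\<lambda>i. if i < m then e else 0) \<le> ereal (\<Sum>i<M. \<bar>if i < m then e else 0\<bar>)"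
    by (rule Phi_n_le_sum_abs)
  also have "(\<Sum>i<M. \<bar>if i < m then e else 0\<bar>) = card ({..<M} \<inter> {..<m}) * e"
    using e by (simp add: sum.If_cases lessThan_def)
  also have "\<dots> \<le> m * e"
    using e card_mono[of "{..<m}" "{..<M} \<inter> {..<m}"] by (intro mult_right_mono) auto
  finally show ?thesis by (simp add: add_left_mono)
qed

lemma exists_near_optimal_decomposition:
  assumes "XL_n TYPE('a) N a < ereal s"
  shows "\<exists>K b (xs :: nat \<Rightarrow> nat \<Rightarrow> 'a). (\<forall>i<N. a i = (\<Sum>j<K. b j i)) \<and> (\<forall>j. unit_disjoint_on {..<N} (xs j)) \<and>
    (\<Sum>j<K. norm (\<Sum>i<N. b j i *\<^sub>R xs j i)) < s"
proof -
  obtain K :: nat and b :: "nat \<Rightarrow> nat \<Rightarrow> real" where dec: "\<forall>i<N. a i = (\<Sum>j<K. b j i)" and less: "(\<Sum>j<K. Phi_n TYPE('a) N (b j)) < ereal s"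
    using assms unfolding XL_n_def Inf_less_iff by blast
  define \<phi> where "\<phi> j = real_of_ereal (Phi_n TYPE('a) N (b j))" for j
  have \<phi>: "ereal (\<phi> j) = Phi_n TYPE('a) N (b j)" for j
    unfolding \<phi>_def using Phi_n_le_sum_abs[of N "b j"]
    by (intro real_of_ereal_nonneg_finite Phi_n_nonneg) auto
  define \<epsilon> where "\<epsilon> = (s - (\<Sum>j<K. \<phi> j)) / (K + 1)"
  have "(\<Sum>j<K. \<phi> j) < s" using less by (simp add: \<phi>[symmetric] sum_ereal)
  then have \<epsilon>: "0 < \<epsilon>" "(\<Sum>j<K. \<phi> j) + K * \<epsilon> < s" by (auto simp: \<epsilon>_def field_simps)
  have "\<exists>x::nat \<Rightarrow> 'a. unit_disjoint_on {..<N} x \<and> norm (\<Sum>i<N. b j i *\<^sub>R x i) < \<phi> j + \<epsilon>" for j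
  proof -
    have "Phi_n TYPE('a) N (b j) < ereal (\<phi> j + \<epsilon>)" unfolding \<phi>[of j, symmetric] using \<epsilon>(1) by simp
    then show ?thesis unfolding Phi_n_def INF_less_iff by (auto simp: disj_tuples_iff)
  qed
  then obtain xs :: "nat \<Rightarrow> nat \<Rightarrow> 'a" where xs: "\<And>j. unit_disjoint_on {..<N} (xs j)"
    "\<And>j. norm (\<Sum>i<N. b j i *\<^sub>R xs j i) < \<phi> j + \<epsilon>" by metis
  have "(\<Sum>j<K. norm (\<Sum>i<N. b j i *\<^sub>R xs j i)) \<le> (\<Sum>j<K. \<phi> j + \<epsilon>)"
    using xs(2) by (intro sum_mono less_imp_le)
  also have "\<dots> < s" using \<epsilon>(2) by (simp add: sum.distrib)
  finally show ?thesis using dec xs(1) by blast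
qed

lemma XL_n_sum_unit_vec_le:
  assumes u: "disj_supported m u"
    and c: "\<And>k. k < m \<Longrightarrow> ereal (c k) = XL_norm TYPE('a) (u k)" "\<And>k. 0 \<le> c k"
    and A: "XL_norm TYPE('a) (\<lambda>i. \<Sum>k<m. u k i) = ereal A" and \<epsilon>: "0 < \<epsilon>"
  shows "XL_n TYPE('a) M (\<lambda>i. \<Sum>k<m. c k * unit_vec k i) \<le> ereal (A + \<epsilon>)"
proof -
  define e where "e = \<epsilon> / (m + 1)"
  have "e + m * e = (m + 1) * e" by (simp add: algebra_simps)
  also have "\<dots> = \<epsilon>" by (simp add: e_def)
  finally have e: "0 < e" "e + m * e = \<epsilon>" using \<epsilon> by (simp_all add: e_def)
  have "ereal (c k - e) < (SUP n. XL_n TYPE('a) n (u k))" if "k < m" for k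
  proof -
    have "ereal (c k - e) < ereal (c k)" using e(1) by simp
    then show ?thesis using c(1)[OF that] by (simp add: XL_norm_def)
  qed
  then have "\<exists>N. \<forall>k<m. ereal (c k - e) < XL_n TYPE('a) N (u k)"
    by (intro exists_common_index_above) (auto simp: mono_def XL_n_mono_dim)
  then obtain N where N: "\<And>k. k < m \<Longrightarrow> ereal (c k - e) < XL_n TYPE('a) N (u k)" by blast
  have "XL_n TYPE('a) N (\<lambda>i. \<Sum>k<m. u k i) \<le> ereal A" unfolding A[symmetric] by (rule XL_n_le_XL_norm)
  also have "\<dots> < ereal (A + e)" using e(1) by simp
  finally obtain K b and xs :: "nat \<Rightarrow> nat \<Rightarrow> 'a" where dec: "\<forall>i<N. (\<Sum>k<m. u k i) = (\<Sum>j<K. b j i)"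
    and xs: "\<And>j. unit_disjoint_on {..<N} (xs j)" and near: "(\<Sum>j<K. norm (\<Sum>i<N. b j i *\<^sub>R xs j i)) < A + e"
    using exists_near_optimal_decomposition by blast
  define C where "C j k = (if k < m then norm (\<Sum>i<N. (if u k i \<noteq> 0 then b j i else 0) *\<^sub>R xs j i) else 0)" for j k
  have "c k - e < (\<Sum>j<K. C j k)" if "k < m" for k
    using order_less_le_trans[OF N[OF that] XL_n_le_restricted_decomposition[where xs = xs, OF u that dec xs]] that
    by (simp add: C_def)
  then have sumC: "c k \<le> (\<Sum>j<K. C j k) + e" if "k < m" for k
    using that by fastforce
  have C0: "0 \<le> C j k" for j k by (simp add: C_def)
  have "XL_n TYPE('a) M (\<lambda>i. \<Sum>k<m. c k * unit_vec k i) \<le> (\<Sum>j<K. Phi_n TYPE('a) M (C j)) + ereal (m * e)"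
    using c(2) C0 e(1) by (intro XL_n_le_of_dominated_plus_const) (auto simp: sum_unit_vec sum_nonneg intro: sumC)
  also have "\<dots> \<le> ereal (\<Sum>j<K. norm (\<Sum>i<N. b j i *\<^sub>R xs j i)) + ereal (m * e)"
  proof (rule add_right_mono)
    have "(\<Sum>j<K. Phi_n TYPE('a) M (C j)) \<le> (\<Sum>j<K. ereal (norm (\<Sum>i<N. b j i *\<^sub>R xs j i)))"
      unfolding C_def by (intro sum_mono Phi_n_restricted_blocks_le xs u)
    then show "(\<Sum>j<K. Phi_n TYPE('a) M (C j)) \<le> ereal (\<Sum>j<K. norm (\<Sum>i<N. b j i *\<^sub>R xs j i))"
      by (simp add: sum_ereal)
  qed
  also have "\<dots> \<le> ereal (A + \<epsilon>)" using near e(2) by simp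
  finally show ?thesis .
qed

lemma XL_norm_sum_disj_supported_ge:
  assumes u: "disj_supported m u" "\<forall>k<m. u k \<in> XL TYPE('a)"
  shows "XL_norm TYPE('a) (\<lambda>i. \<Sum>k<m. real_of_ereal (XL_norm TYPE('a) (u k)) * unit_vec k i)
    \<le> XL_norm TYPE('a) (\<lambda>i. \<Sum>k<m. u k i)"
proof (cases "XL_norm TYPE('a) (\<lambda>i. \<Sum>k<m. u k i) = \<infinity>")
  case False
  define A where "A = real_of_ereal (XL_norm TYPE('a) (\<lambda>i. \<Sum>k<m. u k i))"
  have A: "XL_norm TYPE('a) (\<lambda>i. \<Sum>k<m. u k i) = ereal A"
    using False unfolding A_def by (intro real_of_ereal_nonneg_finite[symmetric] XL_norm_nonneg) (simp add: top.not_eq_extremum)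
  have c: "ereal (real_of_ereal (XL_norm TYPE('a) (u k))) = XL_norm TYPE('a) (u k)" if "k < m" for k
    using u(2) that unfolding XL_def by (intro real_of_ereal_nonneg_finite XL_norm_nonneg) simp
  have "XL_n TYPE('a) M (\<lambda>i. \<Sum>k<m. real_of_ereal (XL_norm TYPE('a) (u k)) * unit_vec k i)
      \<le> ereal A + ereal \<epsilon>" if "0 < \<epsilon>" for M \<epsilon>
    using XL_n_sum_unit_vec_le[OF u(1) c _ A that] by (simp add: real_of_ereal_pos XL_norm_nonneg)
  then have "XL_n TYPE('a) M (\<lambda>i. \<Sum>k<m. real_of_ereal (XL_norm TYPE('a) (u k)) * unit_vec k i)
      \<le> XL_norm TYPE('a) (\<lambda>i. \<Sum>k<m. u k i)" for M
    unfolding A by (rule ereal_le_epsilon2)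
  then show ?thesis unfolding XL_norm_def[of _ "\<lambda>i. \<Sum>k<m. real_of_ereal (XL_norm TYPE('a) (u k)) * unit_vec k i"]
    by (rule SUP_least)
qed simp

end

end

theorem mainTheorem6:
  assumes "banach_lattice TYPE('a::{banach, ordered_real_vector, lattice})"
    and "infinite_dimensional TYPE('a)"
  shows "(\<forall>(m::nat) (u::nat \<Rightarrow> nat \<Rightarrow> real).
            disj_supported m u \<and> (\<forall>k<m. u k \<in> XU TYPE('a)) \<longrightarrow>
            XU_norm TYPE('a) (\<lambda>i. \<Sum>k<m. u k i)
              \<le> XU_norm TYPE('a) (\<lambda>i. \<Sum>k<m. real_of_ereal (XU_norm TYPE('a) (u k)) * unit_vec k i))
       \<and> (\<forall>(m::nat) (u::nat \<Rightarrow> nat \<Rightarrow> real).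
            disj_supported m u \<and> (\<forall>k<m. u k \<in> XL TYPE('a)) \<longrightarrow>
            XL_norm TYPE('a) (\<lambda>i. \<Sum>k<m. real_of_ereal (XL_norm TYPE('a) (u k)) * unit_vec k i)
              \<le> XL_norm TYPE('a) (\<lambda>i. \<Sum>k<m. u k i))"
proof (intro conjI allI impI)
  fix m :: nat and u :: "nat \<Rightarrow> nat \<Rightarrow> real"
  assume "disj_supported m u \<and> (\<forall>k<m. u k \<in> XU TYPE('a))"
  then show "XU_norm TYPE('a) (\<lambda>i. \<Sum>k<m. u k i)
      \<le> XU_norm TYPE('a) (\<lambda>i. \<Sum>k<m. real_of_ereal (XU_norm TYPE('a) (u k)) * unit_vec k i)"
    using XU_norm_sum_disj_supported_le[OF assms] by blast
next
  fix m :: nat and u :: "nat \<Rightarrow> nat \<Rightarrow> real"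
  assume "disj_supported m u \<and> (\<forall>k<m. u k \<in> XL TYPE('a))"
  then show "XL_norm TYPE('a) (\<lambda>i. \<Sum>k<m. real_of_ereal (XL_norm TYPE('a) (u k)) * unit_vec k i)
      \<le> XL_norm TYPE('a) (\<lambda>i. \<Sum>k<m. u k i)"
    using XL_norm_sum_disj_supported_ge[OF assms] by blast
qed

end
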